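(* Let $k$ be a field, let $A=kQ_A/I_A$ be a finite-dimensional monomial algebra with vertices $e_1,\dots,e_n$, and let $B$ be the algebra obtained from $A$ by gluing the two distinct, non-isolated vertices $e_1$ and $e_n$. Assume that for every loop $\alpha$ at $e_1$ or at $e_n$ with $\alpha^m\in Z_A$ for some $m\ge 2$, the characteristic of $k$ does not divide $m$. Then $$\dim_k\mathrm{HH}^1(A)=\dim_k\mathrm{HH}^1(B)-1-\mathrm{kspp}(1,n)+\mathrm{sp}(1,n)+c_A-c_B.$$ In particular, if $e_1$ and $e_n$ lie in the same block of $A$, then $\dim_k\mathrm{HH}^1(A)=\dim_k\mathrm{HH}^1(B)-1-\mathrm{kspp}(1,n)+\mathrm{sp}(1,n)$; if $e_1$ and $e_n$ lie in two different blocks of $A$, then $\mathrm{HH}^1(A)$ is (isomorphic to) a Lie subalgebra of $\mathrm{HH}^1(B)$ and $\dim_k\mathrm{HH}^1(A)=\dim_k\mathrm{HH}^1(B)-\mathrm{kspp}(1,n)$.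
   Context: Monomial algebra: $A=kQ_A/I_A$ with $Q_A$ a finite quiver and $I_A$ an admissible ideal generated by a minimal set $Z_A$ of paths of length $\ge 2$ (no proper subpath of an element of $Z_A$ lies in $Z_A$). $\mathcal B_A$ is the set of paths of $Q_A$ (including trivial paths $e_i$) containing no element of $Z_A$ as a subpath; it is a basis of $A$. $s(\cdot),t(\cdot)$ denote source and target; paths are written right to left. Gluing: $B$ is the subalgebra of $A$ generated by $f_1=e_1+e_n$, $f_i=e_i$ ($2\le i\le n-1$) and all arrows; $B\cong kQ_B/I_B$ where $Q_B$ is obtained from $Q_A$ by identifying $e_1,e_n$ into one vertex $f_1$, each arrow $\alpha$ of $Q_A$ giving an arrow $\alpha^*$ of $Q_B$, and $I_B$ is generated by $Z_B=\{r^*:r\in Z_A\}\cup Z_{new}$, where $Z_{new}$ consists of the paths $b^*c^*$ with $b,c$ arrows of $Q_A$ such that $t(c),s(b)\in\{e_1,e_n\}$ and $t(c)\ne s(b)$. For a path $p=a_m\cdots a_1$ put $p^*=a_m^*\cdots a_1^*$, $e_i^*=f_i$ ($2\le i\le n-1$), $e_1^*=e_n^*=f_1$. $B$ is monomial with basis $\mathcal B_B$ of paths avoiding $Z_B$. $c_A,c_B$ denote the numbers of connected components of $Q_A,Q_B$ (blocks of $A$ correspond to connected components of $Q_A$). Complex: for sets of paths $X,Y$, $X\|Y$ is the set of pairs $x\|y$ ($x\in X,y\in Y$) with $s(x)=s(y)$, $t(x)=t(y)$, and $k(X\|Y)$ the vector space with basis $X\|Y$. For a monomial algebra $\Lambda=kQ/\langle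 Z\rangle$ with basis paths $\mathcal B$: $\delta^0:k(Q_0\|\mathcal B)\to k(Q_1\|\mathcal B)$, $e\|\gamma\mapsto\sum_{s(a)=e,\,a\gamma\in\mathcal B}a\|a\gamma-\sum_{t(a)=e,\,\gamma a\in\mathcal B}a\|\gamma a$ (sums over arrows $a$); $\delta^1:k(Q_1\|\mathcal B)\to k(Z\|\mathcal B)$, $a\|\gamma\mapsto\sum_{r\in Z}r\|r^{a\|\gamma}$, where for a path $u$, $u^{a\|\gamma}$ is the sum, over all occurrences of $a$ in $u$, of the path obtained by replacing that occurrence by $\gamma$, keeping only paths in $\mathcal B$. $\mathrm{Ker}\,\delta^1$ is a Lie algebra under $[a\|\gamma,b\|\epsilon]=b\|\epsilon^{a\|\gamma}-a\|\gamma^{b\|\epsilon}$, $\mathrm{Im}\,\delta^0$ is a Lie ideal, and $\mathrm{HH}^1(\Lambda)\cong\mathrm{Ker}\,\delta^1/\mathrm{Im}\,\delta^0$ as Lie algebras. Write $\delta^i_A,\delta^i_B$ for these maps of $A$, $B$. Special paths: a path $p\in\mathcal B_A$ from $e_1$ to $e_n$ or from $e_n$ to $e_1$ is special if $\delta^0_B(f_1\|p^* )\ne0$, equivalently if there is an arrow $a$ with $ap\notin I_A$ or $pa\notin I_A$; $\mathrm{sp}(1,n)$ is the number of special paths. Special pairs: $(\alpha,p)$ with $\alpha$ an arrow of $Q_A$ and $p\in\mathcal B_A$ such that $\alpha$ starts or ends at $e_1$ or $e_n$, $\alpha^*\|p^*$ in $Q_B$, and $\alpha$ is not parallel to $p$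 in $Q_A$. $Z_{spp}$ is the intersection of $\mathrm{Ker}\,\delta^1_B$ with the span of all $\alpha^*\|p^*$ for special pairs $(\alpha,p)$, and $\mathrm{kspp}(1,n)=\dim_kZ_{spp}$. *)

theory Defs
  imports Complex_Main "HOL-Library.Function_Algebras"
begin

record ('v,'a) quiver =
  verts :: "'v set"
  arrs  :: "'a set"
  src   :: "'a \<Rightarrow> 'v"
  tgt   :: "'a \<Rightarrow> 'v"

definition wf_quiver :: "('v,'a) quiver \<Rightarrow> bool" where
  "wf_quiver Q \<longleftrightarrow> finite (verts Q) \<and> finite (arrs Q) \<and>
     (\<forall>a\<in>arrs Q. src Q a \<in> verts Q \<and> tgt Q a \<in> verts Q)"

text \<open>A nontrivial path a_m ... a_1 (written right to left, a_1 traversed first)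
  is represented by the list [a_m, ..., a_1].\<close>
definition is_apath :: "('v,'a) quiver \<Rightarrow> 'a list \<Rightarrow> bool" where
  "is_apath Q l \<longleftrightarrow> l \<noteq> [] \<and> set l \<subseteq> arrs Q \<and>
     (\<forall>i. Suc i < length l \<longrightarrow> src Q (l ! i) = tgt Q (l ! Suc i))"

datatype ('v,'a) qpath = Triv 'v | Arr "'a list"

fun psrc :: "('v,'a) quiver \<Rightarrow> ('v,'a) qpath \<Rightarrow> 'v" where
  "psrc Q (Triv v) = v"
| "psrc Q (Arr l) = src Q (last l)"

fun ptgt :: "('v,'a) quiver \<Rightarrow> ('v,'a) qpath \<Rightarrow> 'v" where
  "ptgt Q (Triv v) = v"
| "ptgt Q (Arr l) = tgt Q (hd l)"

fun is_qpath :: "('v,'a) quiver \<Rightarrow> ('v,'a) qpath \<Rightarrow> bool" where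
  "is_qpath Q (Triv v) = (v \<in> verts Q)"
| "is_qpath Q (Arr l) = is_apath Q l"

text \<open>composition p q (= p after q, i.e. "p q" written right to left)\<close>
fun pcomp :: "('v,'a) qpath \<Rightarrow> ('v,'a) qpath \<Rightarrow> ('v,'a) qpath" where
  "pcomp (Triv v) q = q"
| "pcomp (Arr l) (Triv v) = Arr l"
| "pcomp (Arr l) (Arr m) = Arr (l @ m)"

definition subpath :: "'a list \<Rightarrow> 'a list \<Rightarrow> bool" where
  "subpath u l \<longleftrightarrow> (\<exists>x y. l = x @ u @ y)"

definition pbasis :: "('v,'a) quiver \<Rightarrow> 'a list set \<Rightarrow> ('v,'a) qpath set" where
  "pbasis Q Z = {p. is_qpath Q p \<and>
     (case p of Triv _ \<Rightarrow> True | Arr l \<Rightarrow> \<not> (\<exists>z\<in>Z. subpath z l))}"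

text \<open>Finite-dimensional monomial algebra kQ/<Z>, Z a minimal set of paths of length >= 2.
  Admissibility follows from finite dimensionality (finite basis).\<close>
definition monomial_algebra :: "('v,'a) quiver \<Rightarrow> 'a list set \<Rightarrow> bool" where
  "monomial_algebra Q Z \<longleftrightarrow> wf_quiver Q \<and>
     (\<forall>z\<in>Z. is_apath Q z \<and> length z \<ge> 2) \<and>
     (\<forall>z\<in>Z. \<forall>z'\<in>Z. subpath z' z \<and> z' \<noteq> z \<longrightarrow> False) \<and>
     finite (pbasis Q Z)"

definition non_isolated :: "('v,'a) quiver \<Rightarrow> 'v \<Rightarrow> bool" where
  "non_isolated Q v \<longleftrightarrow> (\<exists>a\<in>arrs Q. src Q a = v \<or> tgt Q a = v)"

definition adj :: "('v,'a) quiver \<Rightarrow> ('v \<times> 'v) set" where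
  "adj Q = {(u,v). \<exists>a\<in>arrs Q. (src Q a = u \<and> tgt Q a = v) \<or> (src Q a = v \<and> tgt Q a = u)}"

definition conn_rel :: "('v,'a) quiver \<Rightarrow> ('v \<times> 'v) set" where
  "conn_rel Q = {(u,v). u \<in> verts Q \<and> v \<in> verts Q \<and> (u,v) \<in> (adj Q)\<^sup>*}"

definition ncomp :: "('v,'a) quiver \<Rightarrow> nat" where
  "ncomp Q = card (verts Q // conn_rel Q)"

definition same_block :: "('v,'a) quiver \<Rightarrow> 'v \<Rightarrow> 'v \<Rightarrow> bool" where
  "same_block Q u v \<longleftrightarrow> (u,v) \<in> conn_rel Q"

definition fscale :: "'k::times \<Rightarrow> ('x \<Rightarrow> 'k) \<Rightarrow> ('x \<Rightarrow> 'k)" where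
  "fscale c f = (\<lambda>x. c * f x)"

definition kdim :: "('x \<Rightarrow> 'k::field) set \<Rightarrow> nat" where
  "kdim S = vector_space.dim (fscale :: 'k \<Rightarrow> ('x \<Rightarrow> 'k) \<Rightarrow> ('x \<Rightarrow> 'k)) S"

definition kspan :: "('x \<Rightarrow> 'k::field) set \<Rightarrow> ('x \<Rightarrow> 'k) set" where
  "kspan S = module.span (fscale :: 'k \<Rightarrow> ('x \<Rightarrow> 'k) \<Rightarrow> ('x \<Rightarrow> 'k)) S"

definition par :: "('v,'a) quiver \<Rightarrow> ('v,'a) qpath set \<Rightarrow> ('v,'a) qpath set
    \<Rightarrow> (('v,'a) qpath \<times> ('v,'a) qpath) set" where
  "par Q X Y = {(x,y). x \<in> X \<and> y \<in> Y \<and> psrc Q x = psrc Q y \<and> ptgt Q x = ptgt Q y}"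

definition Q0 :: "('v,'a) quiver \<Rightarrow> ('v,'a) qpath set" where
  "Q0 Q = Triv ` verts Q"

definition Q1 :: "('v,'a) quiver \<Rightarrow> ('v,'a) qpath set" where
  "Q1 Q = (\<lambda>a. Arr [a]) ` arrs Q"

definition spanned :: "'x set \<Rightarrow> ('x \<Rightarrow> 'k::zero) set" where
  "spanned P = {f. \<forall>q. q \<notin> P \<longrightarrow> f q = 0}"

definition vind :: "'x \<Rightarrow> 'x \<Rightarrow> 'k::{zero,one}" where
  "vind y = (\<lambda>z. if z = y then 1 else 0)"

definition pt :: "'x \<Rightarrow> 'y \<Rightarrow> ('x \<times> 'y \<Rightarrow> 'k::{zero,one})" where
  "pt x y = vind (x,y)"

definition pairvec :: "'x \<Rightarrow> ('y \<Rightarrow> 'k::zero) \<Rightarrow> ('x \<times> 'y \<Rightarrow> 'k)" where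
  "pairvec x v = (\<lambda>(x',y). if x' = x then v y else 0)"

definition lin_ext :: "'x set \<Rightarrow> ('x \<Rightarrow> ('z \<Rightarrow> 'k::comm_ring)) \<Rightarrow> ('x \<Rightarrow> 'k) \<Rightarrow> ('z \<Rightarrow> 'k)" where
  "lin_ext P T f = (\<Sum>p\<in>P. fscale (f p) (T p))"

definition delta0_b :: "('v,'a) quiver \<Rightarrow> 'a list set \<Rightarrow> ('v,'a) qpath \<times> ('v,'a) qpath
    \<Rightarrow> (('v,'a) qpath \<times> ('v,'a) qpath \<Rightarrow> 'k::comm_ring_1)" where
  "delta0_b Q Z eg = (case eg of (e, \<gamma>) \<Rightarrow>
     (\<Sum>a\<in>{a\<in>arrs Q. src Q a = psrc Q e \<and> pcomp (Arr [a]) \<gamma> \<in> pbasis Q Z}.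
         pt (Arr [a]) (pcomp (Arr [a]) \<gamma>))
   - (\<Sum>a\<in>{a\<in>arrs Q. tgt Q a = psrc Q e \<and> pcomp \<gamma> (Arr [a]) \<in> pbasis Q Z}.
         pt (Arr [a]) (pcomp \<gamma> (Arr [a]))))"

definition delta0 :: "('v,'a) quiver \<Rightarrow> 'a list set
    \<Rightarrow> (('v,'a) qpath \<times> ('v,'a) qpath \<Rightarrow> 'k::comm_ring_1)
    \<Rightarrow> (('v,'a) qpath \<times> ('v,'a) qpath \<Rightarrow> 'k)" where
  "delta0 Q Z = lin_ext (par Q (Q0 Q) (pbasis Q Z)) (delta0_b Q Z)"

definition splice :: "'a list \<Rightarrow> nat \<Rightarrow> ('v,'a) qpath \<Rightarrow> ('v,'a) qpath" where
  "splice l i g = (case g of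
      Triv v \<Rightarrow> (if take i l @ drop (Suc i) l = [] then Triv v
                 else Arr (take i l @ drop (Suc i) l))
    | Arr m \<Rightarrow> Arr (take i l @ m @ drop (Suc i) l))"

definition repl :: "('v,'a) quiver \<Rightarrow> 'a list set \<Rightarrow> 'a \<Rightarrow> ('v,'a) qpath \<Rightarrow> ('v,'a) qpath
    \<Rightarrow> (('v,'a) qpath \<Rightarrow> 'k::comm_ring_1)" where
  "repl Q Z a g u = (case u of Triv _ \<Rightarrow> 0
     | Arr l \<Rightarrow> (\<Sum>i\<in>{i. i < length l \<and> l ! i = a \<and> splice l i g \<in> pbasis Q Z}.
                   vind (splice l i g)))"

definition arrow_of :: "('v,'a) qpath \<Rightarrow> 'a" where
  "arrow_of x = (case x of Arr l \<Rightarrow> hd l | Triv _ \<Rightarrow> undefined)"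

definition delta1_b :: "('v,'a) quiver \<Rightarrow> 'a list set \<Rightarrow> ('v,'a) qpath \<times> ('v,'a) qpath
    \<Rightarrow> (('v,'a) qpath \<times> ('v,'a) qpath \<Rightarrow> 'k::comm_ring_1)" where
  "delta1_b Q Z ag = (case ag of (x, g) \<Rightarrow>
     (\<lambda>(r, y). if r \<in> Arr ` Z then repl Q Z (arrow_of x) g r y else 0))"

definition delta1 :: "('v,'a) quiver \<Rightarrow> 'a list set
    \<Rightarrow> (('v,'a) qpath \<times> ('v,'a) qpath \<Rightarrow> 'k::comm_ring_1)
    \<Rightarrow> (('v,'a) qpath \<times> ('v,'a) qpath \<Rightarrow> 'k)" where
  "delta1 Q Z = lin_ext (par Q (Q1 Q) (pbasis Q Z)) (delta1_b Q Z)"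

definition Ker1 :: "('v,'a) quiver \<Rightarrow> 'a list set
    \<Rightarrow> (('v,'a) qpath \<times> ('v,'a) qpath \<Rightarrow> 'k::comm_ring_1) set" where
  "Ker1 Q Z = {f \<in> spanned (par Q (Q1 Q) (pbasis Q Z)). delta1 Q Z f = 0}"

definition Im0 :: "('v,'a) quiver \<Rightarrow> 'a list set
    \<Rightarrow> (('v,'a) qpath \<times> ('v,'a) qpath \<Rightarrow> 'k::comm_ring_1) set" where
  "Im0 Q Z = delta0 Q Z ` spanned (par Q (Q0 Q) (pbasis Q Z))"

definition hh1_dim :: "'k::field itself \<Rightarrow> ('v,'a) quiver \<Rightarrow> 'a list set \<Rightarrow> int" where
  "hh1_dim _ Q Z = int (kdim (Ker1 Q Z :: (_ \<Rightarrow> 'k) set)) - int (kdim (Im0 Q Z :: (_ \<Rightarrow> 'k) set))"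

definition br_b :: "('v,'a) quiver \<Rightarrow> 'a list set
    \<Rightarrow> ('v,'a) qpath \<times> ('v,'a) qpath \<Rightarrow> ('v,'a) qpath \<times> ('v,'a) qpath
    \<Rightarrow> (('v,'a) qpath \<times> ('v,'a) qpath \<Rightarrow> 'k::comm_ring_1)" where
  "br_b Q Z p q = (case p of (a, g) \<Rightarrow> case q of (b, e) \<Rightarrow>
      pairvec b (repl Q Z (arrow_of a) g e) - pairvec a (repl Q Z (arrow_of b) e g))"

definition bracket :: "('v,'a) quiver \<Rightarrow> 'a list set
    \<Rightarrow> (('v,'a) qpath \<times> ('v,'a) qpath \<Rightarrow> 'k::comm_ring_1)
    \<Rightarrow> (('v,'a) qpath \<times> ('v,'a) qpath \<Rightarrow> 'k)
    \<Rightarrow> (('v,'a) qpath \<times> ('v,'a) qpath \<Rightarrow> 'k)" where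
  "bracket Q Z f g = (\<Sum>p\<in>par Q (Q1 Q) (pbasis Q Z). \<Sum>q\<in>par Q (Q1 Q) (pbasis Q Z).
       fscale (f p * g q) (br_b Q Z p q))"

text \<open>HH^1(Q,Z) embeds as a Lie subalgebra into HH^1(Q',Z'): an injective Lie algebra
  homomorphism Ker/Im -> Ker'/Im', given by a linear map phi: Ker -> Ker'.\<close>
definition hh1_lie_embeds :: "'k::field itself \<Rightarrow> ('v,'a) quiver \<Rightarrow> 'a list set
    \<Rightarrow> ('v,'a) quiver \<Rightarrow> 'a list set \<Rightarrow> bool" where
  "hh1_lie_embeds _ Q Z Q' Z' \<longleftrightarrow>
    (\<exists>\<phi> :: (('v,'a) qpath \<times> ('v,'a) qpath \<Rightarrow> 'k) \<Rightarrow> (('v,'a) qpath \<times> ('v,'a) qpath \<Rightarrow> 'k).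
       (\<forall>x\<in>Ker1 Q Z. \<phi> x \<in> Ker1 Q' Z') \<and>
       (\<forall>x\<in>Ker1 Q Z. \<forall>y\<in>Ker1 Q Z. \<phi> (x + y) = \<phi> x + \<phi> y) \<and>
       (\<forall>c. \<forall>x\<in>Ker1 Q Z. \<phi> (fscale c x) = fscale c (\<phi> x)) \<and>
       (\<forall>x\<in>Ker1 Q Z. \<phi> x \<in> Im0 Q' Z' \<longleftrightarrow> x \<in> Im0 Q Z) \<and>
       (\<forall>x\<in>Ker1 Q Z. \<forall>y\<in>Ker1 Q Z.
          \<phi> (bracket Q Z x y) - bracket Q' Z' (\<phi> x) (\<phi> y) \<in> Im0 Q' Z'))"

definition glue_map :: "'v \<Rightarrow> 'v \<Rightarrow> 'v \<Rightarrow> 'v" where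
  "glue_map e1 en v = (if v = en then e1 else v)"

definition glue :: "('v,'a) quiver \<Rightarrow> 'v \<Rightarrow> 'v \<Rightarrow> ('v,'a) quiver" where
  "glue Q e1 en = \<lparr> verts = glue_map e1 en ` verts Q, arrs = arrs Q,
                    src = glue_map e1 en \<circ> src Q, tgt = glue_map e1 en \<circ> tgt Q \<rparr>"

definition Znew :: "('v,'a) quiver \<Rightarrow> 'v \<Rightarrow> 'v \<Rightarrow> 'a list set" where
  "Znew Q e1 en = {[b, c] | b c. b \<in> arrs Q \<and> c \<in> arrs Q \<and>
      tgt Q c \<in> {e1, en} \<and> src Q b \<in> {e1, en} \<and> tgt Q c \<noteq> src Q b}"

definition glueZ :: "('v,'a) quiver \<Rightarrow> 'a list set \<Rightarrow> 'v \<Rightarrow> 'v \<Rightarrow> 'a list set" where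
  "glueZ Q Z e1 en = Z \<union> Znew Q e1 en"

fun pstar :: "'v \<Rightarrow> 'v \<Rightarrow> ('v,'a) qpath \<Rightarrow> ('v,'a) qpath" where
  "pstar e1 en (Triv v) = Triv (glue_map e1 en v)"
| "pstar e1 en (Arr l) = Arr l"

definition special_paths :: "'k::field itself \<Rightarrow> ('v,'a) quiver \<Rightarrow> 'a list set \<Rightarrow> 'v \<Rightarrow> 'v
    \<Rightarrow> ('v,'a) qpath set" where
  "special_paths _ Q Z e1 en = {p \<in> pbasis Q Z.
      ((psrc Q p = e1 \<and> ptgt Q p = en) \<or> (psrc Q p = en \<and> ptgt Q p = e1)) \<and>
      delta0 (glue Q e1 en) (glueZ Q Z e1 en)
        (pt (Triv (glue_map e1 en e1)) (pstar e1 en p) :: _ \<Rightarrow> 'k) \<noteq> 0}"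

definition sp :: "'k::field itself \<Rightarrow> ('v,'a) quiver \<Rightarrow> 'a list set \<Rightarrow> 'v \<Rightarrow> 'v \<Rightarrow> nat" where
  "sp K Q Z e1 en = card (special_paths K Q Z e1 en)"

definition special_pairs :: "('v,'a) quiver \<Rightarrow> 'a list set \<Rightarrow> 'v \<Rightarrow> 'v
    \<Rightarrow> ('a \<times> ('v,'a) qpath) set" where
  "special_pairs Q Z e1 en = {(\<alpha>, p). \<alpha> \<in> arrs Q \<and> p \<in> pbasis Q Z \<and>
      (src Q \<alpha> \<in> {e1, en} \<or> tgt Q \<alpha> \<in> {e1, en}) \<and>
      psrc (glue Q e1 en) (Arr [\<alpha>]) = psrc (glue Q e1 en) (pstar e1 en p) \<and>
      ptgt (glue Q e1 en) (Arr [\<alpha>]) = ptgt (glue Q e1 en) (pstar e1 en p) \<and>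
      \<not> (src Q \<alpha> = psrc Q p \<and> tgt Q \<alpha> = ptgt Q p)}"

definition Zspp :: "'k::field itself \<Rightarrow> ('v,'a) quiver \<Rightarrow> 'a list set \<Rightarrow> 'v \<Rightarrow> 'v
    \<Rightarrow> (('v,'a) qpath \<times> ('v,'a) qpath \<Rightarrow> 'k) set" where
  "Zspp _ Q Z e1 en = Ker1 (glue Q e1 en) (glueZ Q Z e1 en) \<inter>
      kspan {pt (Arr [\<alpha>]) (pstar e1 en p) | \<alpha> p. (\<alpha>, p) \<in> special_pairs Q Z e1 en}"

definition kspp :: "'k::field itself \<Rightarrow> ('v,'a) quiver \<Rightarrow> 'a list set \<Rightarrow> 'v \<Rightarrow> 'v \<Rightarrow> nat" where
  "kspp K Q Z e1 en = kdim (Zspp K Q Z e1 en)"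

lemma vector_space_fscale: "vector_space (fscale :: 'k::field \<Rightarrow> ('x \<Rightarrow> 'k) \<Rightarrow> ('x \<Rightarrow> 'k))"
  by unfold_locales (auto simp: fscale_def algebra_simps)

end

theory Submission
  imports Defs
begin

(* HH^1 has dimension dim Ker delta1 - dim Im delta0, and gluing changes both spaces in a
   controlled way; the path basis of B is that of A without the trivial path en.

   Kernel: cocycles of A vanish on the pairs \<alpha>\<parallel>e for loops \<alpha> at e1 or en (by the
   hypothesis on the characteristic), cocycles of B vanish on the pairs \<alpha>*\<parallel>f1 because of
   the new relations b*c*, and the remaining basis pairs of B are those of A together with the
   special pairs.  As delta1 of the former takes values parallel to relations and delta1 of the
   latter does not, Ker delta1_B = Ker delta1_A \<oplus> Z_spp.

   Image: delta0 of the nontrivial cycles does not change; the trivial cycles contribute the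
   incidence vectors of the vertices, which span a space of dimension (number of vertices) -
   (number of components), accounting for 1 - c_A + c_B; and the paths between e1 and en, new
   cycles at f1, contribute sp(1,n) independent vectors supported away from everything else.

   If e1 and en lie in different blocks there are no such paths, Im delta0 does not change, and
   Ker delta1_A is a Lie subalgebra of Ker delta1_B with the same bracket. *)

section \<open>Linear algebra in spaces of functions\<close>

interpretation FS: vector_space "fscale :: 'k::field \<Rightarrow> ('x \<Rightarrow> 'k) \<Rightarrow> ('x \<Rightarrow> 'k)"
  by (rule vector_space_fscale)

lemma fscale_apply [simp]: "fscale c f x = c * f x"
  by (simp add: fscale_def)

lemma sum_fun_apply: "(\<Sum>p\<in>P. F p) x = (\<Sum>p\<in>P. F p x)"
  by (induction P rule: infinite_finite_induct) auto

lemma kdim_eq_dim: "kdim S = FS.dim S"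
  by (simp add: kdim_def)

definition vanish :: "'x set \<Rightarrow> ('x \<Rightarrow> 'k::field) set" where
  "vanish G = {f. \<forall>q\<in>G. f q = 0}"

lemma subspace_vanish: "FS.subspace (vanish G)"
  by (auto simp: FS.subspace_def vanish_def)

lemma span_subset_vanish: "X \<subseteq> vanish G \<Longrightarrow> FS.span X \<subseteq> vanish G"
  by (metis FS.span_minimal subspace_vanish)

lemma vanish_antimono: "G \<subseteq> G' \<Longrightarrow> vanish G' \<subseteq> vanish G"
  by (auto simp: vanish_def)

lemma vanish_Int_vanish_Compl: "vanish G \<inter> vanish (- G) \<subseteq> {0}"
  by (auto simp: vanish_def fun_eq_iff) (metis ComplI)

lemma vanish_add_eq_0:
  assumes "x \<in> vanish (- G)" "y \<in> vanish G" "x + y = 0"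
  shows "x = 0" "y = 0"
proof -
  have "x q = 0" for q
  proof -
    have "x q + y q = 0" using fun_cong[OF assms(3), of q] by simp
    then show ?thesis using assms(1,2) by (cases "q \<in> G") (auto simp: vanish_def)
  qed
  then show "x = 0" by (simp add: fun_eq_iff)
  then show "y = 0" using assms(3) by simp
qed

lemma spanned_eq_vanish_Compl: "spanned P = vanish (- P)"
  by (auto simp: spanned_def vanish_def)

lemma subspace_spanned: "FS.subspace (spanned P)"
  by (simp add: spanned_eq_vanish_Compl subspace_vanish)

lemma spanned_mono: "P \<subseteq> P' \<Longrightarrow> spanned P \<subseteq> spanned P'"
  by (auto simp: spanned_def)

lemma not_in_span_Un_diff:
  fixes X Y :: "('x \<Rightarrow> 'k::field) set"
  assumes "FS.independent X" "FS.span X \<inter> FS.span Y \<subseteq> {0}" "a \<in> X" "a \<notin> Y"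
  shows "a \<notin> FS.span ((X \<union> Y) - {a})"
proof
  assume "a \<in> FS.span ((X \<union> Y) - {a})"
  moreover have "(X \<union> Y) - {a} = (X - {a}) \<union> Y" using assms(4) by blast
  ultimately obtain x y where xy: "a = x + y" "x \<in> FS.span (X - {a})" "y \<in> FS.span Y"
    using FS.span_Un[of "X - {a}" Y] by auto
  have "x \<in> FS.span X" using xy(2) FS.span_mono[of "X - {a}" X] by blast
  moreover have "a \<in> FS.span X" using assms(3) FS.span_base by blast
  ultimately have "y \<in> FS.span X" using xy(1) FS.span_diff by fastforce
  then have "y = 0" using xy(3) assms(2) by blast
  then have "a \<in> FS.span (X - {a})" using xy by simp
  then show False using assms(1,3) FS.dependent_def by blast
qed

lemma independent_Un:
  fixes A B :: "('x \<Rightarrow> 'k::field) set"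
  assumes "FS.independent A" "FS.independent B" "FS.span A \<inter> FS.span B \<subseteq> {0}"
  shows "FS.independent (A \<union> B)"
proof -
  have disjoint: "A \<inter> B = {}"
    using assms(1,3) FS.span_base FS.dependent_zero by blast
  show ?thesis
    unfolding FS.dependent_def
  proof
    assume "\<exists>a\<in>A \<union> B. a \<in> FS.span (A \<union> B - {a})"
    then obtain a where a: "a \<in> A \<union> B" "a \<in> FS.span (A \<union> B - {a})" by blast
    show False
    proof (cases "a \<in> A")
      case True
      then show ?thesis using not_in_span_Un_diff[OF assms(1,3)] a disjoint by blast
    next
      case False
      have "FS.span B \<inter> FS.span A \<subseteq> {0}" using assms(3) by blast
      then show ?thesis
        using not_in_span_Un_diff[OF assms(2), of A a] a False by (simp add: Un_commute)
    qed
  qed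
qed

lemma obtain_finite_basis:
  fixes S :: "('x \<Rightarrow> 'k::field) set"
  assumes "S \<subseteq> FS.span W" "finite W"
  obtains B where "B \<subseteq> S" "FS.independent B" "FS.span B = FS.span S" "card B = FS.dim S" "finite B"
proof -
  obtain B where B: "B \<subseteq> S" "FS.independent B" "S \<subseteq> FS.span B" "card B = FS.dim S"
    using FS.basis_exists by blast
  have "B \<subseteq> FS.span W" using B(1) assms(1) by blast
  then have "finite B" using FS.independent_span_bound[OF assms(2) B(2)] by blast
  moreover have "FS.span B = FS.span S"
    using B(1,3) by (metis FS.span_mono FS.span_span subset_antisym)
  ultimately show ?thesis using that B by blast
qed

lemma dim_direct_sum:
  fixes S T :: "('x \<Rightarrow> 'k::field) set"
  assumes "FS.subspace S" "FS.subspace T" "S \<inter> T \<subseteq> {0}"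
    and "S \<subseteq> FS.span W" "T \<subseteq> FS.span W" "finite W"
  shows "FS.dim {x + y | x y. x \<in> S \<and> y \<in> T} = FS.dim S + FS.dim T"
proof -
  obtain BS where BS: "BS \<subseteq> S" "FS.independent BS" "FS.span BS = S" "card BS = FS.dim S" "finite BS"
    using obtain_finite_basis[OF assms(4,6)] assms(1) by (metis FS.span_eq_iff)
  obtain BT where BT: "BT \<subseteq> T" "FS.independent BT" "FS.span BT = T" "card BT = FS.dim T" "finite BT"
    using obtain_finite_basis[OF assms(5,6)] assms(2) by (metis FS.span_eq_iff)
  have independent: "FS.independent (BS \<union> BT)"
    using independent_Un[OF BS(2) BT(2)] BS(3) BT(3) assms(3) by simp
  have disjoint: "BS \<inter> BT = {}"
    using BS(1,2) BT(1) assms(3) FS.dependent_zero by blast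
  have "FS.dim {x + y | x y. x \<in> S \<and> y \<in> T} = FS.dim (FS.span (BS \<union> BT))"
    using FS.span_Un[of BS BT] BS(3) BT(3) by simp
  also have "\<dots> = card BS + card BT"
    using FS.dim_span_eq_card_independent[OF independent] disjoint BS(5) BT(5)
    by (simp add: card_Un_disjoint)
  finally show ?thesis using BS(4) BT(4) by simp
qed

lemma dim_span_Un_vanish:
  fixes X Y :: "('x \<Rightarrow> 'k::field) set"
  assumes "finite X" "finite Y" "X \<subseteq> vanish G" "Y \<subseteq> vanish (- G)"
  shows "FS.dim (FS.span (X \<union> Y)) = FS.dim (FS.span X) + FS.dim (FS.span Y)"
proof -
  have "FS.span X \<inter> FS.span Y \<subseteq> {0}"
    using span_subset_vanish[OF assms(3)] span_subset_vanish[OF assms(4)] vanish_Int_vanish_Compl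
    by blast
  moreover have "FS.span X \<subseteq> FS.span (X \<union> Y)" "FS.span Y \<subseteq> FS.span (X \<union> Y)"
    by (simp_all add: FS.span_mono)
  ultimately show ?thesis
    using dim_direct_sum[OF FS.subspace_span FS.subspace_span, of X Y "X \<union> Y"] assms(1,2)
    by (simp add: FS.span_Un[of X Y])
qed

lemma dim_insert_not_in_span:
  fixes S :: "('x \<Rightarrow> 'k::field) set"
  assumes "S \<subseteq> FS.span W" "finite W" "x \<notin> FS.span S"
  shows "FS.dim (insert x S) = FS.dim S + 1"
proof -
  obtain B where B: "B \<subseteq> S" "FS.independent B" "FS.span B = FS.span S" "card B = FS.dim S" "finite B"
    using obtain_finite_basis[OF assms(1,2)] by blast
  have xB: "x \<notin> FS.span B" using B(3) assms(3) by simp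
  then have "x \<notin> B" using FS.span_base by blast
  have "FS.span (insert x B) = FS.span (insert x S)"
    using B(3) by (simp add: FS.span_insert)
  then have "FS.dim (insert x S) = FS.dim (FS.span (insert x B))" by (metis FS.dim_span)
  also have "\<dots> = card (insert x B)"
    using FS.dim_span_eq_card_independent[OF FS.independent_insertI[OF xB B(2)]] .
  also have "\<dots> = card B + 1" using \<open>x \<notin> B\<close> B(5) by simp
  finally show ?thesis using B(4) by simp
qed

lemma span_insert_insert_add:
  "FS.span (insert a (insert (a + b) T)) = FS.span (insert a (insert b (T :: ('x \<Rightarrow> 'k::field) set)))"
proof -
  have "a + b \<in> FS.span (insert a (insert b T))"
    by (intro FS.span_add FS.span_base) auto
  moreover have "(a + b) - a \<in> FS.span (insert a (insert (a + b) T))"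
    by (intro FS.span_diff FS.span_base) auto
  then have "b \<in> FS.span (insert a (insert (a + b) T))" by simp
  ultimately show ?thesis
    by (intro iffD2[OF FS.span_eq] conjI) (auto intro: FS.span_base)
qed

lemma independent_disjoint_supports:
  fixes X :: "('x \<Rightarrow> 'k::field) set"
  assumes "0 \<notin> X" "\<And>x y q. x \<in> X \<Longrightarrow> y \<in> X \<Longrightarrow> x \<noteq> y \<Longrightarrow> x q = 0 \<or> y q = 0"
  shows "FS.independent X"
  unfolding FS.dependent_def
proof
  assume "\<exists>a\<in>X. a \<in> FS.span (X - {a})"
  then obtain a where a: "a \<in> X" "a \<in> FS.span (X - {a})" by blast
  have "a \<noteq> 0" using a(1) assms(1) by blast
  then obtain q where q: "a q \<noteq> 0" by (auto simp: fun_eq_iff)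
  have "X - {a} \<subseteq> vanish {q}" using assms(2)[OF a(1)] q by (auto simp: vanish_def)
  then have "FS.span (X - {a}) \<subseteq> vanish {q}" by (rule span_subset_vanish)
  then show False using a(2) q by (auto simp: vanish_def)
qed

lemma dim_span_disjoint_supports:
  fixes F :: "'p \<Rightarrow> ('x \<Rightarrow> 'k::field)"
  assumes nonzero: "\<And>p. p \<in> S \<Longrightarrow> F p \<noteq> 0"
    and disjoint: "\<And>p p' q. p \<in> S \<Longrightarrow> p' \<in> S \<Longrightarrow> p \<noteq> p' \<Longrightarrow> F p q = 0 \<or> F p' q = 0"
  shows "FS.dim (FS.span (F ` S)) = card S"
proof -
  have "inj_on F S"
  proof (rule inj_onI, rule ccontr)
    fix p p' assume pp: "p \<in> S" "p' \<in> S" "F p = F p'" "p \<noteq> p'"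
    then have "F p q = 0" for q using disjoint[OF pp(1,2,4), of q] by simp
    then show False using nonzero[OF pp(1)] by (simp add: fun_eq_iff)
  qed
  moreover have "FS.independent (F ` S)"
  proof (rule independent_disjoint_supports)
    show "0 \<notin> F ` S" using nonzero by force
    fix x y q assume "x \<in> F ` S" "y \<in> F ` S" "x \<noteq> y"
    then obtain p p' where "p \<in> S" "p' \<in> S" "x = F p" "y = F p'" "p \<noteq> p'" by blast
    then show "x q = 0 \<or> y q = 0" using disjoint by blast
  qed
  ultimately show ?thesis by (simp add: FS.dim_eq_card_independent card_image)
qed

lemma spanned_eq_span:
  assumes "finite P"
  shows "spanned P = FS.span (vind ` P :: ('x \<Rightarrow> 'k::field) set)"
proof
  show "FS.span (vind ` P :: ('x \<Rightarrow> 'k) set) \<subseteq> spanned P"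
    by (rule FS.span_minimal[OF _ subspace_spanned]) (force simp: spanned_def vind_def)
  show "spanned P \<subseteq> FS.span (vind ` P :: ('x \<Rightarrow> 'k) set)"
  proof
    fix f :: "'x \<Rightarrow> 'k" assume f: "f \<in> spanned P"
    have "f = (\<Sum>p\<in>P. fscale (f p) (vind p))"
    proof
      fix z
      have "(\<Sum>p\<in>P. fscale (f p) (vind p)) z = (\<Sum>p\<in>P. f p * (if z = p then 1 else 0))"
        by (simp add: sum_fun_apply vind_def)
      also have "\<dots> = f z"
        using f assms by (auto simp: spanned_def if_distrib sum.delta cong: if_cong)
      finally show "f z = (\<Sum>p\<in>P. fscale (f p) (vind p)) z" by simp
    qed
    moreover have "(\<Sum>p\<in>P. fscale (f p) (vind p)) \<in> FS.span (vind ` P)"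
      by (intro FS.span_sum FS.span_scale FS.span_base) auto
    ultimately show "f \<in> FS.span (vind ` P)" by simp
  qed
qed

lemma span_image_sum_repr:
  fixes T :: "'p \<Rightarrow> ('x \<Rightarrow> 'k::field)"
  assumes "finite P" "x \<in> FS.span (T ` P)"
  obtains c where "x = (\<Sum>p\<in>P. fscale (c p) (T p))"
proof -
  have "\<exists>c. x = (\<Sum>p\<in>P. fscale (c p) (T p))"
    using assms(2)
  proof (induction rule: FS.span_induct_alt)
    case base
    show ?case by (rule exI[of _ "\<lambda>_. 0"]) (auto simp: fun_eq_iff sum_fun_apply)
  next
    case (step c x y)
    then obtain p0 d where p0: "p0 \<in> P" "x = T p0" and d: "y = (\<Sum>p\<in>P. fscale (d p) (T p))"
      by blast
    have repr: "fscale c x + y = (\<Sum>p\<in>P. fscale (d p + (if p = p0 then c else 0)) (T p))"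
    proof
      fix z
      have "(\<Sum>p\<in>P. fscale (d p + (if p = p0 then c else 0)) (T p)) z
          = (\<Sum>p\<in>P. d p * T p z) + (\<Sum>p\<in>P. (if p = p0 then c * T p z else 0))"
        unfolding sum_fun_apply sum.distrib[symmetric] by (rule sum.cong) (auto simp: distrib_right)
      then show "(fscale c x + y) z = (\<Sum>p\<in>P. fscale (d p + (if p = p0 then c else 0)) (T p)) z"
        using p0 d assms(1) by (simp add: sum_fun_apply sum.delta)
    qed
    show ?case by (rule exI) (rule repr)
  qed
  then show ?thesis using that by blast
qed

lemma lin_ext_apply: "lin_ext P T f x = (\<Sum>p\<in>P. f p * T p x)"
  by (simp add: lin_ext_def sum_fun_apply)

lemma lin_ext_add: "lin_ext P T (f + g) = lin_ext P T f + lin_ext P T g"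
  by (rule ext) (simp add: lin_ext_apply distrib_right sum.distrib)

lemma lin_ext_scale: "lin_ext P T (fscale c f) = fscale c (lin_ext P T f)"
  by (rule ext) (simp add: lin_ext_apply sum_distrib_left mult.assoc)

lemma lin_ext_zero: "lin_ext P T 0 = 0"
  by (rule ext) (simp add: lin_ext_apply)

lemma lin_ext_restrict:
  assumes "P' \<subseteq> P" "finite P" "\<And>p. p \<in> P - P' \<Longrightarrow> f p = 0"
  shows "lin_ext P T f = lin_ext P' T f"
  unfolding lin_ext_def
  by (rule sum.mono_neutral_right[OF assms(2,1)]) (auto simp: assms(3) fscale_def fun_eq_iff)

lemma lin_ext_restrict_spanned:
  assumes "P' \<subseteq> P" "finite P" "f \<in> spanned P'"
  shows "lin_ext P T f = lin_ext P' T f"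
  using assms by (intro lin_ext_restrict) (auto simp: spanned_def)

lemma lin_ext_cong: "(\<And>p. p \<in> P \<Longrightarrow> T p = T' p) \<Longrightarrow> lin_ext P T f = lin_ext P T' f"
  by (simp add: lin_ext_def)

lemma lin_ext_vind:
  assumes "finite P" "p \<in> P"
  shows "lin_ext P T (vind p) = (T p :: 'z \<Rightarrow> 'k::field)"
proof
  fix x
  have "lin_ext P T (vind p) x = (\<Sum>p'\<in>P. if p' = p then T p' x else 0)"
    unfolding lin_ext_apply by (rule sum.cong) (auto simp: vind_def)
  also have "\<dots> = T p x" using assms by (simp add: sum.delta)
  finally show "lin_ext P T (vind p) x = T p x" .
qed

lemma lin_ext_apply_delta:
  assumes "finite P" "p0 \<in> P" "\<And>p. p \<in> P \<Longrightarrow> T p q = (if p = p0 then c else 0)"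
  shows "lin_ext P T f q = f p0 * (c :: 'k::comm_ring_1)"
proof -
  have "lin_ext P T f q = (\<Sum>p\<in>P. if p = p0 then f p0 * c else 0)"
    unfolding lin_ext_apply by (rule sum.cong) (auto simp: assms(3))
  also have "\<dots> = f p0 * c" using assms(1,2) by (simp add: sum.delta)
  finally show ?thesis .
qed

lemma lin_ext_image:
  fixes T :: "'p \<Rightarrow> ('z \<Rightarrow> 'k::field)"
  assumes "finite P"
  shows "lin_ext P T ` spanned P = FS.span (T ` P)"
proof
  show "lin_ext P T ` spanned P \<subseteq> FS.span (T ` P)"
    unfolding lin_ext_def by (blast intro: FS.span_sum FS.span_scale FS.span_base)
  show "FS.span (T ` P) \<subseteq> lin_ext P T ` spanned P"
  proof
    fix x assume "x \<in> FS.span (T ` P)"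
    then obtain c where c: "x = (\<Sum>p\<in>P. fscale (c p) (T p))"
      using span_image_sum_repr[OF assms] by blast
    let ?f = "\<lambda>p. if p \<in> P then c p else 0"
    have "?f \<in> spanned P" by (simp add: spanned_def)
    moreover have "lin_ext P T ?f = x" unfolding c lin_ext_def by (rule sum.cong) auto
    ultimately show "x \<in> lin_ext P T ` spanned P" by force
  qed
qed

lemma lin_ext_in_subspace:
  assumes "FS.subspace S" "\<And>p. p \<in> P \<Longrightarrow> T p \<in> S"
  shows "lin_ext P T f \<in> (S :: ('z \<Rightarrow> 'k::field) set)"
  unfolding lin_ext_def using assms by (intro FS.subspace_sum) (auto intro: FS.subspace_scale)

lemma lin_ext_vanish:
  "(\<And>p. p \<in> P \<Longrightarrow> T p \<in> vanish G) \<Longrightarrow> lin_ext P T f \<in> (vanish G :: (_ \<Rightarrow> 'k::field) set)"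
  by (rule lin_ext_in_subspace[OF subspace_vanish])

lemma double_sum_restrict_spanned:
  assumes "finite P" "P' \<subseteq> P" "f \<in> spanned P'" "g \<in> spanned P'"
  shows "(\<Sum>p\<in>P. \<Sum>q\<in>P. fscale (f p * g q) (B p q))
       = (\<Sum>p\<in>P'. \<Sum>q\<in>P'. fscale (f p * g q) (B p q) :: 'z \<Rightarrow> 'k::field)"
proof -
  have "(\<Sum>p\<in>P. \<Sum>q\<in>P. fscale (f p * g q) (B p q))
      = (\<Sum>p\<in>P'. \<Sum>q\<in>P. fscale (f p * g q) (B p q) :: 'z \<Rightarrow> 'k)"
    using assms(3) by (intro sum.mono_neutral_right[OF assms(1,2)]) (auto simp: spanned_def fun_eq_iff)
  also have "\<dots> = (\<Sum>p\<in>P'. \<Sum>q\<in>P'. fscale (f p * g q) (B p q))"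
    using assms(4) by (intro sum.cong[OF refl] sum.mono_neutral_right[OF assms(1,2)])
      (auto simp: spanned_def fun_eq_iff)
  finally show ?thesis .
qed

lemma subspace_Ker1: "FS.subspace (Ker1 Q Z :: (_ \<Rightarrow> 'k::field) set)"
  unfolding FS.subspace_def Ker1_def delta1_def
  using subspace_spanned[unfolded FS.subspace_def]
  by (auto simp: lin_ext_zero lin_ext_add lin_ext_scale fun_eq_iff)

section \<open>Paths, components and the differentials\<close>

lemma is_apath_Cons:
  "is_apath Q (a # l) \<longleftrightarrow> a \<in> arrs Q \<and> (l = [] \<or> (is_apath Q l \<and> src Q a = tgt Q (hd l)))"
proof
  assume H: "is_apath Q (a # l)"
  show "a \<in> arrs Q \<and> (l = [] \<or> (is_apath Q l \<and> src Q a = tgt Q (hd l)))"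
  proof (cases l)
    case (Cons b l')
    have "src Q a = tgt Q (hd l)" using H Cons unfolding is_apath_def by force
    moreover have "src Q (l ! i) = tgt Q (l ! Suc i)" if "Suc i < length l" for i
      using H that unfolding is_apath_def by (metis Suc_less_eq length_Cons nth_Cons_Suc)
    ultimately show ?thesis using H Cons by (auto simp: is_apath_def)
  qed (use H in \<open>auto simp: is_apath_def\<close>)
next
  assume H: "a \<in> arrs Q \<and> (l = [] \<or> (is_apath Q l \<and> src Q a = tgt Q (hd l)))"
  show "is_apath Q (a # l)"
    unfolding is_apath_def
  proof (intro conjI allI impI)
    show "a # l \<noteq> []" "set (a # l) \<subseteq> arrs Q" using H by (auto simp: is_apath_def)
    fix i assume i: "Suc i < length (a # l)"
    show "src Q ((a # l) ! i) = tgt Q ((a # l) ! Suc i)"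
      using H i by (cases i; cases l) (auto simp: is_apath_def)
  qed
qed

lemma is_apath_single: "is_apath Q [a] \<longleftrightarrow> a \<in> arrs Q"
  by (simp add: is_apath_Cons)

lemma is_apath_append:
  assumes "l1 \<noteq> []" "l2 \<noteq> []"
  shows "is_apath Q (l1 @ l2) \<longleftrightarrow> is_apath Q l1 \<and> is_apath Q l2 \<and> src Q (last l1) = tgt Q (hd l2)"
  using assms(1)
proof (induction l1)
  case (Cons a l1)
  then show ?case using assms(2) by (cases "l1 = []") (auto simp: is_apath_Cons)
qed simp

lemma is_apath_replicate:
  "a \<in> arrs Q \<Longrightarrow> src Q a = tgt Q a \<Longrightarrow> is_apath Q (replicate (Suc n) a)"
  by (induction n) (auto simp: is_apath_Cons)

lemma is_apath_split_at:
  assumes "is_apath Q l" "i < length l"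
  defines "u \<equiv> take i l" and "v \<equiv> drop (Suc i) l"
  shows "l = u @ [l ! i] @ v"
    and "u \<noteq> [] \<Longrightarrow> src Q (last u) = tgt Q (l ! i)"
    and "v \<noteq> [] \<Longrightarrow> src Q (l ! i) = tgt Q (hd v)"
    and "src Q (last l) = (if v = [] then src Q (l ! i) else src Q (last v))"
    and "tgt Q (hd l) = (if u = [] then tgt Q (l ! i) else tgt Q (hd u))"
proof -
  show l: "l = u @ [l ! i] @ v" unfolding u_def v_def using id_take_nth_drop[OF assms(2)] by simp
  show "u \<noteq> [] \<Longrightarrow> src Q (last u) = tgt Q (l ! i)"
    using l assms(1) is_apath_append[of u "l ! i # v" Q] by simp
  have "is_apath Q (l ! i # v)"
    using l assms(1) is_apath_append[of u "l ! i # v" Q] by (cases "u = []") auto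
  then show "v \<noteq> [] \<Longrightarrow> src Q (l ! i) = tgt Q (hd v)"
    by (simp add: is_apath_Cons)
  show "src Q (last l) = (if v = [] then src Q (l ! i) else src Q (last v))"
    by (subst l) simp
  show "tgt Q (hd l) = (if u = [] then tgt Q (l ! i) else tgt Q (hd u))"
    by (subst l) (cases u; simp)
qed

lemma subpath_Cons: "subpath z (a # l) \<longleftrightarrow> (\<exists>y. a # l = z @ y) \<or> subpath z l"
proof
  assume "subpath z (a # l)"
  then obtain x y where xy: "a # l = x @ z @ y" by (auto simp: subpath_def)
  then show "(\<exists>y. a # l = z @ y) \<or> subpath z l"
    by (cases x) (auto simp: subpath_def)
next
  assume "(\<exists>y. a # l = z @ y) \<or> subpath z l"
  then show "subpath z (a # l)"
    by (auto simp: subpath_def) (metis append_Nil, metis append_Cons)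
qed

lemma subpath_append_right: "subpath z l \<Longrightarrow> subpath z (l @ y)"
  by (auto simp: subpath_def) (metis append.assoc)

lemma subpath_trans: "subpath u v \<Longrightarrow> subpath v w \<Longrightarrow> subpath u w"
  by (auto simp: subpath_def) (metis append.assoc)

lemma subpath_refl: "subpath u u"
  by (auto simp: subpath_def intro: exI[of _ "[]"])

lemma subpath_length: "subpath u v \<Longrightarrow> length u \<le> length v"
  by (auto simp: subpath_def)

lemma subpath_replicate:
  assumes "subpath z (replicate n a)"
  shows "z = replicate (length z) a"
proof -
  obtain x y where "replicate n a = x @ z @ y" using assms by (auto simp: subpath_def)
  then have "set z \<subseteq> set (replicate n a)" by auto
  then show ?thesis by (auto intro!: replicate_length_same[symmetric])
qed

lemma subpath_replicate_mono: "m \<le> n \<Longrightarrow> subpath (replicate m a) (replicate n a)"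
  unfolding subpath_def
  by (rule exI[of _ "[]"], rule exI[of _ "replicate (n - m) a"]) (simp add: replicate_add[symmetric])

lemma take_drop_replicate:
  "i < m \<Longrightarrow> take i (replicate m a) @ drop (Suc i) (replicate m a) = replicate (m - 1) a"
  by (simp add: take_replicate drop_replicate replicate_add[symmetric])

lemma arrow_of_single [simp]: "arrow_of (Arr [a]) = a"
  by (simp add: arrow_of_def)

lemma pt_apply: "pt x y q = (if q = (x, y) then 1 else 0)"
  by (simp add: pt_def vind_def)

lemma splice_pair:
  "splice [b, c] 0 (Triv w) = Arr [c]" "splice [b, c] 0 (Arr m) = Arr (m @ [c])"
  "splice [b, c] (Suc 0) (Triv w) = Arr [b]" "splice [b, c] (Suc 0) (Arr m) = Arr (b # m)"
  by (simp_all add: splice_def)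

lemma splice_Arr: "splice l i (Arr m) = Arr (take i l @ m @ drop (Suc i) l)"
  by (simp add: splice_def)

lemma splice_Triv:
  "i < length l \<Longrightarrow> 2 \<le> length l \<Longrightarrow> splice l i (Triv w) = Arr (take i l @ drop (Suc i) l)"
  by (auto simp: splice_def)
lemma splice_Arr_parallel_iff:
  assumes l: "is_apath Q l" "i < length l" and m: "m \<noteq> []"
    and path: "is_apath Q (take i l @ m @ drop (Suc i) l)" (is "is_apath Q ?y")
  shows "src Q (last ?y) = src Q (last l) \<and> tgt Q (hd ?y) = tgt Q (hd l)
     \<longleftrightarrow> src Q (last m) = src Q (l ! i) \<and> tgt Q (hd m) = tgt Q (l ! i)"
proof -
  define u v where "u = take i l" and "v = drop (Suc i) l"
  note D = is_apath_split_at[OF l, folded u_def v_def]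
  have path': "is_apath Q (u @ m @ v)" using path by (simp add: u_def v_def)
  then have "u \<noteq> [] \<Longrightarrow> src Q (last u) = tgt Q (hd m)"
    using m is_apath_append[of u "m @ v" Q] by simp
  moreover have "is_apath Q (m @ v)"
    using path' m is_apath_append[of u "m @ v" Q] by (cases "u = []") simp_all
  then have "v \<noteq> [] \<Longrightarrow> src Q (last m) = tgt Q (hd v)"
    using m is_apath_append[of m v Q] by simp
  ultimately show ?thesis
    unfolding u_def[symmetric] v_def[symmetric] using D(2-5) m
    by (cases "u = []"; cases "v = []") auto
qed

lemma splice_Triv_parallel_iff:
  assumes l: "is_apath Q l" "i < length l" "2 \<le> length l"
    and path: "is_apath Q (take i l @ drop (Suc i) l)" (is "is_apath Q ?y")
  shows "src Q (last ?y) = src Q (last l) \<and> tgt Q (hd ?y) = tgt Q (hd l)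
     \<longleftrightarrow> src Q (l ! i) = tgt Q (l ! i)"
proof -
  define u v where "u = take i l" and "v = drop (Suc i) l"
  note D = is_apath_split_at[OF l(1,2), folded u_def v_def]
  have "length l = Suc (length u + length v)" using arg_cong[OF D(1), of length] by simp
  moreover have "u \<noteq> [] \<Longrightarrow> v \<noteq> [] \<Longrightarrow> src Q (last u) = tgt Q (hd v)"
    using path is_apath_append[of u v Q] by (simp add: u_def v_def)
  ultimately show ?thesis
    unfolding u_def[symmetric] v_def[symmetric] using D(2-5) l(3)
    by (cases "u = []"; cases "v = []") auto
qed

lemma repl_Arr_apply:
  "repl Q Z a g (Arr l) y = (of_nat (card {i. i < length l \<and> l ! i = a \<and>
      splice l i g \<in> pbasis Q Z \<and> splice l i g = y}) :: 'k::comm_ring_1)"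
proof -
  let ?I = "{i. i < length l \<and> l ! i = a \<and> splice l i g \<in> pbasis Q Z}"
  have "repl Q Z a g (Arr l) y = (\<Sum>i\<in>?I. (if splice l i g = y then 1 else 0 :: 'k))"
    by (simp add: repl_def sum_fun_apply vind_def eq_commute)
  also have "\<dots> = of_nat (card {i\<in>?I. splice l i g = y})"
    by (simp add: sum.inter_filter[symmetric])
  finally show ?thesis by (simp add: conj_assoc)
qed

lemma repl_nonzero_imp:
  assumes "(repl Q Z a g (Arr l) y :: 'k::comm_ring_1) \<noteq> 0"
  shows "\<exists>i<length l. l ! i = a \<and> splice l i g = y \<and> y \<in> pbasis Q Z"
proof (rule ccontr)
  assume "\<not> ?thesis"
  then have empty: "{i. i < length l \<and> l ! i = a \<and> splice l i g \<in> pbasis Q Z \<and> splice l i g = y} = {}"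
    by auto
  show False using assms unfolding repl_Arr_apply empty by simp
qed

lemma delta1_b_apply:
  "delta1_b Q Z (x, g) (r, y) = (if r \<in> Arr ` Z then repl Q Z (arrow_of x) g r y else 0)"
  by (simp add: delta1_b_def)

lemma sum_pt_nonzero_imp:
  assumes "(\<Sum>a\<in>S. pt (f a) (g a) q :: 'k::comm_ring_1) \<noteq> 0"
  shows "\<exists>a\<in>S. q = (f a, g a)"
  using assms by (rule contrapos_np) (auto simp: pt_apply intro: sum.neutral)

lemma delta0_b_nonzero_imp:
  assumes "(delta0_b Q Z (e, \<gamma>) q :: 'k::comm_ring_1) \<noteq> 0"
  shows "\<exists>a\<in>arrs Q. (q = (Arr [a], pcomp (Arr [a]) \<gamma>) \<and> pcomp (Arr [a]) \<gamma> \<in> pbasis Q Z)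
     \<or> (q = (Arr [a], pcomp \<gamma> (Arr [a])) \<and> pcomp \<gamma> (Arr [a]) \<in> pbasis Q Z)"
proof -
  let ?S1 = "{a\<in>arrs Q. src Q a = psrc Q e \<and> pcomp (Arr [a]) \<gamma> \<in> pbasis Q Z}"
  let ?S2 = "{a\<in>arrs Q. tgt Q a = psrc Q e \<and> pcomp \<gamma> (Arr [a]) \<in> pbasis Q Z}"
  have "(\<Sum>a\<in>?S1. pt (Arr [a]) (pcomp (Arr [a]) \<gamma>) q :: 'k) \<noteq> 0
      \<or> (\<Sum>a\<in>?S2. pt (Arr [a]) (pcomp \<gamma> (Arr [a])) q :: 'k) \<noteq> 0"
    using assms by (auto simp: delta0_b_def sum_fun_apply)
  then show ?thesis by (auto dest!: sum_pt_nonzero_imp)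
qed

lemma delta0_b_vertex:
  assumes "finite (arrs Q)" "\<And>a. Arr [a] \<in> pbasis Q Z \<longleftrightarrow> a \<in> arrs Q"
  shows "(delta0_b Q Z (Triv v, Triv v) q :: 'k::comm_ring_1) =
    (if \<exists>b\<in>arrs Q. q = (Arr [b], Arr [b])
     then (if src Q (arrow_of (fst q)) = v then 1 else 0) - (if tgt Q (arrow_of (fst q)) = v then 1 else 0)
     else 0)"
proof (cases "\<exists>b\<in>arrs Q. q = (Arr [b], Arr [b])")
  case True
  then obtain b where b: "b \<in> arrs Q" "q = (Arr [b], Arr [b])" by blast
  let ?S1 = "{a\<in>arrs Q. src Q a = v \<and> Arr [a] \<in> pbasis Q Z}"
  let ?S2 = "{a\<in>arrs Q. tgt Q a = v \<and> Arr [a] \<in> pbasis Q Z}"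
  have "(delta0_b Q Z (Triv v, Triv v) q :: 'k)
      = (\<Sum>a\<in>?S1. if a = b then 1 else 0) - (\<Sum>a\<in>?S2. if a = b then 1 else 0)"
    using b by (simp add: delta0_b_def sum_fun_apply pt_apply eq_commute)
  also have "\<dots> = (if src Q b = v then 1 else 0) - (if tgt Q b = v then 1 else 0)"
    using assms b by (simp add: sum.delta')
  finally show ?thesis using True b by simp
next
  case False
  then show ?thesis using delta0_b_nonzero_imp[of Q Z "Triv v" "Triv v" q] by auto
qed

lemma sym_adj: "sym (adj Q)"
  by (auto simp: sym_def adj_def)

lemma equiv_conn_rel: "equiv (verts Q) (conn_rel Q)"
proof (rule equivI)
  show "conn_rel Q \<subseteq> verts Q \<times> verts Q" "refl_on (verts Q) (conn_rel Q)"
    by (auto simp: conn_rel_def intro: refl_onI)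
  show "sym (conn_rel Q)"
    using sym_rtrancl[OF sym_adj[of Q]] by (auto simp: sym_def conn_rel_def)
  show "trans (conn_rel Q)" by (auto simp: trans_def conn_rel_def)
qed

lemma adj_rtrancl_sym: "(u, w) \<in> (adj Q)\<^sup>* \<Longrightarrow> (w, u) \<in> (adj Q)\<^sup>*"
  using sym_rtrancl[OF sym_adj[of Q]] by (auto simp: sym_def)

lemma arr_in_adj: "a \<in> arrs Q \<Longrightarrow> (src Q a, tgt Q a) \<in> adj Q \<and> (tgt Q a, src Q a) \<in> adj Q"
  by (auto simp: adj_def)

lemma adj_rtrancl_const:
  assumes "\<And>a. a \<in> arrs Q \<Longrightarrow> h (src Q a) = h (tgt Q a)" "(u, w) \<in> (adj Q)\<^sup>*"
  shows "h u = h w"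
  using assms(2)
proof (induction rule: rtrancl_induct)
  case (step y z)
  then show ?case using assms(1) by (auto simp: adj_def)
qed simp

lemma is_apath_ends_connected: "is_apath Q l \<Longrightarrow> (src Q (last l), tgt Q (hd l)) \<in> (adj Q)\<^sup>*"
proof (induction l)
  case (Cons a l)
  show ?case
  proof (cases "l = []")
    case False
    then have "(src Q (last l), src Q a) \<in> (adj Q)\<^sup>*" "(src Q a, tgt Q a) \<in> adj Q"
      using Cons arr_in_adj[of a Q] by (auto simp: is_apath_Cons)
    then show ?thesis using False by (simp add: rtrancl.rtrancl_into_rtrancl)
  qed (use Cons.prems arr_in_adj[of a Q] in \<open>auto simp: is_apath_Cons\<close>)
qed (simp add: is_apath_def)

section \<open>The glued quiver\<close>

lemma glue_map_simps [simp]: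
  "glue_map e1 en en = e1" "v \<noteq> en \<Longrightarrow> glue_map e1 en v = v"
  by (auto simp: glue_map_def)

lemma glue_sel [simp]:
  "verts (glue Q e1 en) = glue_map e1 en ` verts Q"
  "arrs (glue Q e1 en) = arrs Q"
  "src (glue Q e1 en) = glue_map e1 en \<circ> src Q"
  "tgt (glue Q e1 en) = glue_map e1 en \<circ> tgt Q"
  by (auto simp: glue_def)

lemma glue_map_eq_iff:
  "glue_map e1 en u = glue_map e1 en w \<longleftrightarrow> u = w \<or> (u = e1 \<and> w = en) \<or> (u = en \<and> w = e1)"
  by (auto simp: glue_map_def)

locale gluing =
  fixes Q :: "('v,'a) quiver" and Z :: "'a list set" and e1 en :: 'v
  assumes monomial: "monomial_algebra Q Z"
    and e1_vert: "e1 \<in> verts Q" and en_vert: "en \<in> verts Q" and e1_ne_en: "e1 \<noteq> en"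
    and e1_non_isolated: "non_isolated Q e1" and en_non_isolated: "non_isolated Q en"
begin

abbreviation "QB \<equiv> glue Q e1 en"
abbreviation "ZB \<equiv> glueZ Q Z e1 en"
abbreviation "ZN \<equiv> Znew Q e1 en"
abbreviation "gm \<equiv> glue_map e1 en"
abbreviation "BA \<equiv> pbasis Q Z"
abbreviation "BB \<equiv> pbasis QB ZB"

lemma finite_verts: "finite (verts Q)"
  and finite_arrs: "finite (arrs Q)"
  and src_vert: "a \<in> arrs Q \<Longrightarrow> src Q a \<in> verts Q"
  and tgt_vert: "a \<in> arrs Q \<Longrightarrow> tgt Q a \<in> verts Q"
  using monomial by (auto simp: monomial_algebra_def wf_quiver_def)

lemma relation_apath: "z \<in> Z \<Longrightarrow> is_apath Q z"
  and relation_length: "z \<in> Z \<Longrightarrow> length z \<ge> 2"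
  using monomial by (auto simp: monomial_algebra_def)

lemma relation_minimal: "z \<in> Z \<Longrightarrow> z' \<in> Z \<Longrightarrow> subpath z' z \<Longrightarrow> z' = z"
  using monomial by (auto simp: monomial_algebra_def)

lemma finite_BA: "finite BA"
  using monomial by (auto simp: monomial_algebra_def)

lemma Znew_pair_iff:
  "[b, c] \<in> ZN \<longleftrightarrow> b \<in> arrs Q \<and> c \<in> arrs Q \<and> tgt Q c \<in> {e1, en} \<and> src Q b \<in> {e1, en}
     \<and> tgt Q c \<noteq> src Q b"
  by (auto simp: Znew_def)

lemma Znew_pair: "z \<in> ZN \<Longrightarrow> \<exists>b c. z = [b, c]"
  by (auto simp: Znew_def)

lemma glue_verts: "verts QB = verts Q - {en}"
  using e1_vert e1_ne_en by (force simp: glue_map_def)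

lemma is_apath_glue_iff:
  "set l \<subseteq> arrs Q \<Longrightarrow> (is_apath QB l \<and> \<not> (\<exists>z\<in>ZN. subpath z l)) \<longleftrightarrow> is_apath Q l"
proof (induction l)
  case Nil then show ?case by (simp add: is_apath_def)
next
  case (Cons a l)
  have a: "a \<in> arrs Q" using Cons.prems by simp
  show ?case
  proof (cases "l = []")
    case True
    have "\<not> subpath z [a]" if "z \<in> ZN" for z
      using that subpath_length[of z "[a]"] by (auto simp: Znew_def)
    then show ?thesis using True a by (auto simp: is_apath_Cons)
  next
    case False
    have hd: "hd l \<in> arrs Q" using Cons.prems False by (cases l) auto
    have "(\<exists>z\<in>ZN. subpath z (a # l)) \<longleftrightarrow> [a, hd l] \<in> ZN \<or> (\<exists>z\<in>ZN. subpath z l)"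
    proof
      assume "\<exists>z\<in>ZN. subpath z (a # l)"
      then obtain b c where "[b, c] \<in> ZN" "subpath [b, c] (a # l)" by (metis Znew_pair)
      then show "[a, hd l] \<in> ZN \<or> (\<exists>z\<in>ZN. subpath z l)"
        unfolding subpath_Cons using False by (cases l) auto
    next
      have "a # l = [a, hd l] @ tl l" using False by simp
      then show "[a, hd l] \<in> ZN \<or> (\<exists>z\<in>ZN. subpath z l) \<Longrightarrow> \<exists>z\<in>ZN. subpath z (a # l)"
        unfolding subpath_Cons by blast
    qed
    moreover have "(gm (src Q a) = gm (tgt Q (hd l)) \<and> [a, hd l] \<notin> ZN) \<longleftrightarrow> src Q a = tgt Q (hd l)"
      using a hd by (auto simp: Znew_pair_iff glue_map_eq_iff)
    ultimately show ?thesis using Cons False a by (auto simp: is_apath_Cons)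
  qed
qed

lemma basis_Arr_glue_iff: "Arr l \<in> BB \<longleftrightarrow> Arr l \<in> BA"
proof -
  have "is_apath Q l \<Longrightarrow> set l \<subseteq> arrs Q" "is_apath QB l \<Longrightarrow> set l \<subseteq> arrs Q"
    by (simp_all add: is_apath_def)
  then show ?thesis
    using is_apath_glue_iff[of l] by (auto simp: pbasis_def glueZ_def)
qed

lemma basis_Triv_iff: "Triv v \<in> BA \<longleftrightarrow> v \<in> verts Q"
  by (simp add: pbasis_def)

lemma basis_Triv_glue_iff: "Triv v \<in> BB \<longleftrightarrow> v \<in> verts Q \<and> v \<noteq> en"
  using glue_verts by (simp add: pbasis_def)

lemma pbasis_glue: "BB = BA - {Triv en}"
proof (rule set_eqI)
  fix q show "q \<in> BB \<longleftrightarrow> q \<in> BA - {Triv en}"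
    by (cases q) (auto simp: basis_Arr_glue_iff basis_Triv_iff basis_Triv_glue_iff)
qed

lemma finite_BB: "finite BB"
  using finite_BA pbasis_glue by simp

lemma basis_Arr: "Arr l \<in> BA \<Longrightarrow> is_apath Q l \<and> l \<noteq> []"
  by (simp add: pbasis_def is_apath_def)

lemma basis_single_iff: "Arr [a] \<in> BA \<longleftrightarrow> a \<in> arrs Q"
proof -
  have "\<not> subpath z [a]" if "z \<in> Z" for z
    using relation_length[OF that] subpath_length[of z "[a]"] by auto
  then show ?thesis by (auto simp: pbasis_def is_apath_single)
qed

lemma basis_subpath: "Arr l \<in> BA \<Longrightarrow> subpath m l \<Longrightarrow> m \<noteq> [] \<Longrightarrow> Arr m \<in> BA"
proof -
  assume H: "Arr l \<in> BA" "subpath m l" "m \<noteq> []"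
  then obtain x y where l: "l = x @ m @ y" by (auto simp: subpath_def)
  have "is_apath Q l" using H by (simp add: pbasis_def)
  then have "is_apath Q (m @ y)"
    using l H(3) is_apath_append[of x "m @ y" Q] by (cases "x = []") auto
  then have "is_apath Q m"
    using H(3) is_apath_append[of m y Q] by (cases "y = []") auto
  moreover have "\<not> (\<exists>z\<in>Z. subpath z m)"
    using H(1,2) subpath_trans by (auto simp: pbasis_def)
  ultimately show ?thesis by (simp add: pbasis_def)
qed

lemma basis_Cons: "Arr (a # l) \<in> BA \<Longrightarrow> l \<noteq> [] \<Longrightarrow> src Q a = tgt Q (hd l) \<and> Arr l \<in> BA"
proof -
  assume H: "Arr (a # l) \<in> BA" "l \<noteq> []"
  have "Arr l \<in> BA" using basis_subpath[OF H(1)] H(2) by (simp add: subpath_Cons subpath_refl)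
  moreover have "is_apath Q (a # l)" using basis_Arr[OF H(1)] by blast
  ultimately show ?thesis using H(2) unfolding is_apath_Cons by blast
qed

lemma basis_snoc: "Arr (l @ [a]) \<in> BA \<Longrightarrow> l \<noteq> [] \<Longrightarrow> tgt Q a = src Q (last l) \<and> Arr l \<in> BA"
proof -
  assume H: "Arr (l @ [a]) \<in> BA" "l \<noteq> []"
  have "Arr l \<in> BA"
    using basis_subpath[OF H(1)] H(2) by (simp add: subpath_append_right subpath_refl)
  moreover have "is_apath Q (l @ [a])" using basis_Arr[OF H(1)] by blast
  ultimately show ?thesis using H(2) is_apath_append[of l "[a]" Q] by auto
qed

lemma psrc_glue: "q \<in> BB \<Longrightarrow> psrc QB q = gm (psrc Q q)"
  and ptgt_glue: "q \<in> BB \<Longrightarrow> ptgt QB q = gm (ptgt Q q)"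
  by (cases q; auto simp: basis_Triv_glue_iff)+

lemma loop_power_relation:
  assumes "a \<in> arrs Q" "src Q a = tgt Q a"
  obtains m where "m \<ge> 2" "replicate m a \<in> Z"
proof -
  have "inj (\<lambda>n. Arr (replicate (Suc n) a) :: ('v,'a) qpath)"
    by (rule injI) simp
  then obtain n where "Arr (replicate (Suc n) a) \<notin> BA"
    using finite_BA by (metis finite_imageD finite_subset image_subsetI infinite_UNIV_char_0)
  then obtain z where z: "z \<in> Z" "subpath z (replicate (Suc n) a)"
    using is_apath_replicate[OF assms] by (auto simp: pbasis_def)
  then show ?thesis
    using that subpath_replicate[OF z(2)] relation_length[OF z(1)] by metis
qed

lemma basis_power_below_relation:
  assumes "a \<in> arrs Q" "src Q a = tgt Q a" "replicate m a \<in> Z" "m \<ge> 2"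
  shows "Arr (replicate (m - 1) a) \<in> BA"
proof -
  have "is_apath Q (replicate (m - 1) a)"
    using is_apath_replicate[OF assms(1,2), of "m - 2"] assms(4) by (simp add: Suc_diff_Suc numeral_2_eq_2)
  moreover have "\<not> subpath z (replicate (m - 1) a)" if z: "z \<in> Z" for z
  proof
    assume sub: "subpath z (replicate (m - 1) a)"
    then have "z = replicate m a"
      using relation_minimal[OF assms(3) z] subpath_trans subpath_replicate_mono[of "m - 1" m a]
      by fastforce
    then show False using subpath_length[OF sub] assms(4) by simp
  qed
  ultimately show ?thesis by (auto simp: pbasis_def)
qed

abbreviation "R \<equiv> conn_rel Q"
abbreviation "RB \<equiv> conn_rel QB"

lemma rtrancl_adj_glue: "(x, y) \<in> (adj Q)\<^sup>* \<Longrightarrow> (gm x, gm y) \<in> (adj QB)\<^sup>*"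
proof (induction rule: rtrancl_induct)
  case (step y z)
  then have "(gm y, gm z) \<in> adj QB" by (auto simp: adj_def)
  then show ?case using step(3) by (rule rtrancl_into_rtrancl[rotated])
qed simp

lemma rtrancl_adj_glue_lift:
  assumes "(p, q) \<in> (adj QB)\<^sup>*" "gm u = p"
  shows "\<exists>w. gm w = q \<and> (u, w) \<in> (adj Q \<union> {(e1, en), (en, e1)})\<^sup>*"
  using assms
proof (induction rule: rtrancl_induct)
  case base then show ?case by auto
next
  case (step y z)
  let ?E = "adj Q \<union> {(e1, en), (en, e1)}"
  obtain w where w: "gm w = y" "(u, w) \<in> ?E\<^sup>*" using step by blast
  have glued: "gm x = gm x' \<Longrightarrow> (x, x') \<in> ?E\<^sup>*" for x x'
    by (auto simp: glue_map_eq_iff)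
  obtain a where a: "a \<in> arrs Q" "gm (src Q a) = y \<and> gm (tgt Q a) = z \<or> gm (src Q a) = z \<and> gm (tgt Q a) = y"
    using step(2) by (auto simp: adj_def)
  then obtain s t where st: "(s, t) \<in> adj Q" "gm s = y" "gm t = z"
    using arr_in_adj[OF a(1)] by blast
  have "(w, s) \<in> ?E\<^sup>*" using glued w(1) st(2) by simp
  with w(2) have "(u, s) \<in> ?E\<^sup>*" by (rule rtrancl_trans)
  moreover have "(s, t) \<in> ?E" using st(1) by blast
  ultimately have "(u, t) \<in> ?E\<^sup>*" by (rule rtrancl_into_rtrancl)
  then show ?case using st(3) by blast
qed

lemma rtrancl_adj_glued_edge:
  assumes "(u, w) \<in> (adj Q \<union> {(e1, en), (en, e1)})\<^sup>*"
  shows "(u, w) \<in> (adj Q)\<^sup>* \<or>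
    (((u, e1) \<in> (adj Q)\<^sup>* \<or> (u, en) \<in> (adj Q)\<^sup>*) \<and> ((e1, w) \<in> (adj Q)\<^sup>* \<or> (en, w) \<in> (adj Q)\<^sup>*))"
  using assms
proof (induction rule: rtrancl_induct)
  case (step y z)
  show ?case
  proof (cases "(y, z) \<in> adj Q")
    case True
    then show ?thesis using step(3) by (meson rtrancl.rtrancl_into_rtrancl)
  next
    case False
    then have "(y = e1 \<and> z = en) \<or> (y = en \<and> z = e1)" using step(2) by auto
    then show ?thesis using step(3) by auto
  qed
qed simp

lemma conn_rel_glue_iff:
  assumes u: "u \<in> verts Q" and w: "w \<in> verts Q"
  shows "(gm u, gm w) \<in> RB \<longleftrightarrow> (u, w) \<in> R \<or> (((u, e1) \<in> R \<or> (u, en) \<in> R) \<and> ((e1, w) \<in> R \<or> (en, w) \<in> R))"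
proof
  assume "(gm u, gm w) \<in> RB"
  then obtain w' where w': "gm w' = gm w" "(u, w') \<in> (adj Q \<union> {(e1, en), (en, e1)})\<^sup>*"
    using rtrancl_adj_glue_lift by (fastforce simp: conn_rel_def)
  moreover have "(w', w) \<in> (adj Q \<union> {(e1, en), (en, e1)})\<^sup>*"
    using w'(1) by (auto simp: glue_map_eq_iff)
  ultimately have "(u, w) \<in> (adj Q \<union> {(e1, en), (en, e1)})\<^sup>*"
    by (meson rtrancl_trans)
  from rtrancl_adj_glued_edge[OF this]
  show "(u, w) \<in> R \<or> (((u, e1) \<in> R \<or> (u, en) \<in> R) \<and> ((e1, w) \<in> R \<or> (en, w) \<in> R))"
    using u w e1_vert en_vert by (auto simp: conn_rel_def)
next
  assume H: "(u, w) \<in> R \<or> (((u, e1) \<in> R \<or> (u, en) \<in> R) \<and> ((e1, w) \<in> R \<or> (en, w) \<in> R))"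
  have "(gm u, gm w) \<in> (adj QB)\<^sup>*"
    using H
  proof
    assume "(u, w) \<in> R"
    then show ?thesis using rtrancl_adj_glue by (auto simp: conn_rel_def)
  next
    assume H2: "((u, e1) \<in> R \<or> (u, en) \<in> R) \<and> ((e1, w) \<in> R \<or> (en, w) \<in> R)"
    then have "(gm u, e1) \<in> (adj QB)\<^sup>*"
      using rtrancl_adj_glue[of u e1] rtrancl_adj_glue[of u en] e1_ne_en by (auto simp: conn_rel_def)
    moreover have "(e1, gm w) \<in> (adj QB)\<^sup>*"
      using H2 rtrancl_adj_glue[of e1 w] rtrancl_adj_glue[of en w] e1_ne_en by (auto simp: conn_rel_def)
    ultimately show ?thesis by (rule rtrancl_trans)
  qed
  then show "(gm u, gm w) \<in> RB" using u w by (simp add: conn_rel_def)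
qed

definition component_image :: "'v set \<Rightarrow> 'v set" where
  "component_image X = RB `` (gm ` X)"

lemma component_image_class:
  assumes x: "x \<in> verts Q"
  shows "component_image (R `` {x}) = RB `` {gm x}"
proof
  show "RB `` {gm x} \<subseteq> component_image (R `` {x})"
    using x equiv_class_self[OF equiv_conn_rel x] by (auto simp: component_image_def)
  show "component_image (R `` {x}) \<subseteq> RB `` {gm x}"
  proof
    fix z assume "z \<in> component_image (R `` {x})"
    then obtain y where y: "(x, y) \<in> R" "(gm y, z) \<in> RB" by (auto simp: component_image_def)
    have "y \<in> verts Q" using y(1) by (auto simp: conn_rel_def)
    then have "(gm x, gm y) \<in> RB" using conn_rel_glue_iff[OF x] y(1) by blast
    then show "z \<in> RB `` {gm x}"
      using y(2) equiv_conn_rel[of QB] by (auto simp: equiv_def trans_def)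
  qed
qed

lemma component_image_quotient: "component_image ` (verts Q // R) = verts QB // RB"
proof
  show "component_image ` (verts Q // R) \<subseteq> verts QB // RB"
    using component_image_class by (auto elim!: quotientE intro!: quotientI)
  show "verts QB // RB \<subseteq> component_image ` (verts Q // R)"
  proof
    fix Y assume "Y \<in> verts QB // RB"
    then obtain x where "x \<in> verts Q" "Y = RB `` {gm x}" by (auto elim!: quotientE)
    then show "Y \<in> component_image ` (verts Q // R)"
      using component_image_class by (auto intro: quotientI)
  qed
qed

lemma component_image_eq_imp:
  assumes x: "x \<in> verts Q" and y: "y \<in> verts Q"
    and eq: "component_image (R `` {x}) = component_image (R `` {y})"
  shows "(x, y) \<in> R \<or> (((x, e1) \<in> R \<or> (x, en) \<in> R) \<and> ((e1, y) \<in> R \<or> (en, y) \<in> R))"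
proof -
  have "RB `` {gm x} = RB `` {gm y}" using eq component_image_class x y by simp
  moreover have "gm y \<in> verts QB" using y by simp
  ultimately have "(gm x, gm y) \<in> RB" using eq_equiv_class equiv_conn_rel by metis
  then show ?thesis using conn_rel_glue_iff[OF x y] by blast
qed

lemma finite_components: "finite (verts Q // R)"
  using finite_verts by (rule finite_quotient) (auto simp: conn_rel_def)

lemma conn_rel_sym: "(a, b) \<in> R \<Longrightarrow> (b, a) \<in> R"
  and conn_rel_trans: "(a, b) \<in> R \<Longrightarrow> (b, c) \<in> R \<Longrightarrow> (a, c) \<in> R"
  using equiv_conn_rel[of Q] unfolding equiv_def sym_def trans_def by blast+

lemma inj_on_component_image:
  assumes "same_block Q e1 en"
  shows "inj_on component_image (verts Q // R)"
proof (rule inj_onI)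
  have e1n: "(e1, en) \<in> R" using assms by (simp add: same_block_def)
  fix X Y assume "X \<in> verts Q // R" "Y \<in> verts Q // R" and eq: "component_image X = component_image Y"
  then obtain x y where xy: "x \<in> verts Q" "X = R `` {x}" "y \<in> verts Q" "Y = R `` {y}"
    by (auto elim!: quotientE)
  have "(x, e1) \<in> R \<and> (e1, y) \<in> R" if "((x, e1) \<in> R \<or> (x, en) \<in> R) \<and> ((e1, y) \<in> R \<or> (en, y) \<in> R)"
    using that conn_rel_trans[OF _ conn_rel_sym[OF e1n], of x] conn_rel_trans[OF e1n, of y] by blast
  then have "(x, y) \<in> R"
    using component_image_eq_imp[OF xy(1,3)] eq xy(2,4) conn_rel_trans by blast
  then show "X = Y" using xy equiv_class_eq[OF equiv_conn_rel] by simp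
qed

lemma inj_on_component_image_Diff:
  "inj_on component_image (verts Q // R - {R `` {en}})"
proof (rule inj_onI)
  fix X Y assume X: "X \<in> verts Q // R - {R `` {en}}" and Y: "Y \<in> verts Q // R - {R `` {en}}"
    and eq: "component_image X = component_image Y"
  then obtain x y where xy: "x \<in> verts Q" "X = R `` {x}" "y \<in> verts Q" "Y = R `` {y}"
    by (auto elim!: quotientE)
  have "(x, en) \<notin> R"
  proof
    assume "(x, en) \<in> R"
    then have "R `` {x} = R `` {en}" by (rule equiv_class_eq[OF equiv_conn_rel])
    then show False using X xy by simp
  qed
  moreover have "(en, y) \<notin> R"
  proof
    assume "(en, y) \<in> R"
    then have "R `` {en} = R `` {y}" by (rule equiv_class_eq[OF equiv_conn_rel])
    then show False using Y xy by simp
  qed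
  ultimately have "(x, y) \<in> R"
    using component_image_eq_imp[OF xy(1,3)] eq xy(2,4) conn_rel_trans by blast
  then show "X = Y" using xy equiv_class_eq[OF equiv_conn_rel] by simp
qed

lemma ncomp_glue_same_block:
  assumes "same_block Q e1 en"
  shows "ncomp Q = ncomp QB"
  using card_image[OF inj_on_component_image[OF assms]] component_image_quotient
  by (simp add: ncomp_def)

lemma ncomp_glue_not_same_block:
  assumes "\<not> same_block Q e1 en"
  shows "ncomp Q = ncomp QB + 1"
proof -
  let ?Cn = "R `` {en}" and ?C1 = "R `` {e1}"
  have Cn: "?Cn \<in> verts Q // R" using en_vert by (rule quotientI)
  have "?C1 \<noteq> ?Cn"
    using assms eq_equiv_class[OF _ equiv_conn_rel en_vert] by (auto simp: same_block_def)
  then have C1: "?C1 \<in> verts Q // R - {?Cn}" using e1_vert by (auto intro: quotientI)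
  have "component_image ?Cn = component_image ?C1"
    using component_image_class[OF en_vert] component_image_class[OF e1_vert] e1_ne_en by simp
  then have "component_image ` (verts Q // R - {?Cn}) = verts QB // RB"
    using C1 component_image_quotient by blast
  then have "ncomp QB = card (verts Q // R) - 1"
    using card_image[OF inj_on_component_image_Diff] card_Diff_singleton[OF Cn] by (simp add: ncomp_def)
  moreover have "card (verts Q // R) \<noteq> 0" using finite_components Cn by auto
  ultimately show ?thesis by (simp add: ncomp_def)
qed

end

section \<open>The first differential\<close>

context gluing
begin

abbreviation "P1A \<equiv> par Q (Q1 Q) BA"
abbreviation "P1B \<equiv> par QB (Q1 QB) BB"

definition loop_pairsA :: "(('v,'a) qpath \<times> ('v,'a) qpath) set" where
  "loop_pairsA = {(Arr [a], Triv v) | a v. a \<in> arrs Q \<and> src Q a = v \<and> tgt Q a = v \<and> v \<in> {e1, en}}"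

definition loop_pairsB :: "(('v,'a) qpath \<times> ('v,'a) qpath) set" where
  "loop_pairsB = {(Arr [a], Triv e1) | a. a \<in> arrs Q \<and> src Q a = tgt Q a \<and> src Q a \<in> {e1, en}}"

definition new_pairs :: "(('v,'a) qpath \<times> ('v,'a) qpath) set" where
  "new_pairs = P1B - loop_pairsB - P1A"

lemma Q1_glue: "Q1 QB = Q1 Q"
  by (simp add: Q1_def)

lemma P1A_iff:
  "(x, y) \<in> P1A \<longleftrightarrow> (\<exists>a\<in>arrs Q. x = Arr [a] \<and> y \<in> BA \<and> src Q a = psrc Q y \<and> tgt Q a = ptgt Q y)"
  by (auto simp: par_def Q1_def)

lemma P1B_iff:
  "(x, y) \<in> P1B \<longleftrightarrow>
     (\<exists>a\<in>arrs Q. x = Arr [a] \<and> y \<in> BB \<and> gm (src Q a) = gm (psrc Q y) \<and> gm (tgt Q a) = gm (ptgt Q y))"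
  using psrc_glue ptgt_glue by (auto simp: par_def Q1_def)

lemma finite_P1A: "finite P1A"
  using finite_arrs finite_BA
  by (auto simp: par_def Q1_def intro: finite_subset[of _ "Q1 Q \<times> BA"])

lemma finite_P1B: "finite P1B"
  using finite_arrs finite_BB
  by (auto simp: par_def Q1_def intro: finite_subset[of _ "Q1 Q \<times> BB"])

lemma loop_pairsA_subset: "loop_pairsA \<subseteq> P1A"
  by (auto simp: loop_pairsA_def P1A_iff basis_Triv_iff basis_single_iff src_vert)

lemma loop_pairsB_subset: "loop_pairsB \<subseteq> P1B"
proof
  fix p assume "p \<in> loop_pairsB"
  then obtain a where a: "p = (Arr [a], Triv e1)" "a \<in> arrs Q" "src Q a = tgt Q a" "src Q a \<in> {e1, en}"
    by (auto simp: loop_pairsB_def)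
  have "gm (src Q a) = e1" using a(4) by (auto simp: glue_map_def)
  then show "p \<in> P1B" using a e1_vert e1_ne_en by (auto simp: P1B_iff basis_Triv_glue_iff)
qed

lemma new_pairs_subset: "new_pairs \<subseteq> P1B"
  by (auto simp: new_pairs_def)

lemma P1A_loop_pairsA_not_en: "(x, y) \<in> P1A - loop_pairsA \<Longrightarrow> y \<noteq> Triv en"
  by (auto simp: P1A_iff loop_pairsA_def)

lemma P1A_loop_pairsA_subset: "P1A - loop_pairsA \<subseteq> P1B - loop_pairsB"
proof
  fix p assume p: "p \<in> P1A - loop_pairsA"
  then obtain a y where a: "p = (Arr [a], y)" "a \<in> arrs Q" "y \<in> BA" "src Q a = psrc Q y" "tgt Q a = ptgt Q y"
    by (metis DiffD1 P1A_iff surj_pair)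
  have "y \<in> BB" using p a(1,3) P1A_loop_pairsA_not_en pbasis_glue by blast
  then have "p \<in> P1B" using a by (auto simp: P1B_iff)
  moreover have "p \<notin> loop_pairsB"
    using p a by (auto simp: loop_pairsB_def loop_pairsA_def)
  ultimately show "p \<in> P1B - loop_pairsB" by blast
qed

lemma P1B_loop_pairsB_eq: "P1B - loop_pairsB = (P1A - loop_pairsA) \<union> new_pairs"
proof -
  have "p \<notin> loop_pairsA" if "p \<in> P1B - loop_pairsB" for p
  proof
    assume "p \<in> loop_pairsA"
    then obtain a v where av: "p = (Arr [a], Triv v)" "a \<in> arrs Q" "src Q a = v" "tgt Q a = v" "v \<in> {e1, en}"
      by (auto simp: loop_pairsA_def)
    then have "v \<noteq> en" using that by (auto simp: P1B_iff basis_Triv_glue_iff)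
    then show False using that av by (auto simp: loop_pairsB_def)
  qed
  then show ?thesis using P1A_loop_pairsA_subset by (auto simp: new_pairs_def)
qed

lemma new_pairs_disjoint: "(P1A - loop_pairsA) \<inter> new_pairs = {}"
  by (auto simp: new_pairs_def)

lemma pstar_basis: "p \<in> BA \<Longrightarrow> pstar e1 en p \<in> BB"
  using e1_vert e1_ne_en
  by (cases p) (auto simp: basis_Triv_iff basis_Triv_glue_iff basis_Arr_glue_iff glue_map_def)

lemma psrc_pstar: "psrc QB (pstar e1 en p) = gm (psrc Q p)"
  and ptgt_pstar: "ptgt QB (pstar e1 en p) = gm (ptgt Q p)"
  by (cases p; simp)+

lemma special_pair_image_subset:
  assumes "(\<alpha>, p) \<in> special_pairs Q Z e1 en"
  shows "(Arr [\<alpha>], pstar e1 en p) \<in> new_pairs \<union> loop_pairsB"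
proof -
  have sp: "\<alpha> \<in> arrs Q" "p \<in> BA" "gm (src Q \<alpha>) = gm (psrc Q p)" "gm (tgt Q \<alpha>) = gm (ptgt Q p)"
      "\<not> (src Q \<alpha> = psrc Q p \<and> tgt Q \<alpha> = ptgt Q p)"
    using assms psrc_pstar ptgt_pstar by (auto simp: special_pairs_def)
  have "pstar e1 en p \<in> BB" using pstar_basis sp(2) by blast
  then have inB: "(Arr [\<alpha>], pstar e1 en p) \<in> P1B"
    using sp psrc_pstar[of p] ptgt_pstar[of p] psrc_glue ptgt_glue by (auto simp: P1B_iff)
  show ?thesis
  proof (cases "(Arr [\<alpha>], pstar e1 en p) \<in> P1A")
    case True
    then have par: "src Q \<alpha> = psrc Q (pstar e1 en p)" "tgt Q \<alpha> = ptgt Q (pstar e1 en p)"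
      by (auto simp: P1A_iff)
    then obtain v where v: "p = Triv v" "gm v \<noteq> v"
      using sp(5) by (cases p) auto
    then have "v = en" by (metis glue_map_simps(2))
    then show ?thesis using v par sp(1) by (auto simp: loop_pairsB_def)
  qed (use inB in \<open>auto simp: new_pairs_def\<close>)
qed

lemma new_pair_special:
  assumes "(Arr [a], y) \<in> new_pairs"
  shows "(a, y) \<in> special_pairs Q Z e1 en \<and> pstar e1 en y = y"
proof -
  have a: "a \<in> arrs Q" "y \<in> BB" "gm (src Q a) = gm (psrc Q y)" "gm (tgt Q a) = gm (ptgt Q y)"
    and notA: "(Arr [a], y) \<notin> P1A"
    using assms by (auto simp: new_pairs_def P1B_iff)
  have yA: "y \<in> BA" using a(2) pbasis_glue by auto
  have "\<not> (src Q a = psrc Q y \<and> tgt Q a = ptgt Q y)" using notA a(1) yA by (auto simp: P1A_iff)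
  moreover from this have "src Q a \<in> {e1, en} \<or> tgt Q a \<in> {e1, en}"
    using a(3,4) by (auto simp: glue_map_eq_iff)
  moreover have "pstar e1 en y = y"
    using a(2) by (cases y) (auto simp: basis_Triv_glue_iff)
  ultimately show ?thesis
    using a yA psrc_glue[OF a(2)] ptgt_glue[OF a(2)] by (auto simp: special_pairs_def)
qed

lemma new_pair_not_parallel:
  assumes p: "(Arr [a], g) \<in> new_pairs"
  shows "\<not> (src Q a = psrc Q g \<and> tgt Q a = ptgt Q g)"
proof
  assume par: "src Q a = psrc Q g \<and> tgt Q a = ptgt Q g"
  have "a \<in> arrs Q" "g \<in> BB" and notA: "(Arr [a], g) \<notin> P1A"
    using p by (auto simp: new_pairs_def P1B_iff)
  then have "(Arr [a], g) \<in> P1A" using par pbasis_glue by (auto simp: P1A_iff)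
  then show False using notA by blast
qed

lemma new_pair_Triv_not_loop:
  assumes p: "(Arr [a], Triv w) \<in> new_pairs"
  shows "src Q a \<noteq> tgt Q a"
proof
  assume loop: "src Q a = tgt Q a"
  have a: "a \<in> arrs Q" "Triv w \<in> BB" "gm (src Q a) = gm w" and notB: "(Arr [a], Triv w) \<notin> loop_pairsB"
    using p by (auto simp: new_pairs_def P1B_iff)
  have "w \<noteq> en" using a(2) basis_Triv_glue_iff by blast
  moreover have "src Q a \<noteq> w" using new_pair_not_parallel[OF p] loop by auto
  ultimately have "src Q a = en" "w = e1" using a(3) by (auto simp: glue_map_def split: if_splits)
  then have "(Arr [a], Triv w) \<in> loop_pairsB" using a(1) loop by (auto simp: loop_pairsB_def)
  then show False using notB by blast
qed

lemma loop_pair_special: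
  assumes "(Arr [a], Triv e1) \<in> loop_pairsB"
  obtains v where "(a, Triv v) \<in> special_pairs Q Z e1 en" "pstar e1 en (Triv v) = Triv e1"
proof -
  have a: "a \<in> arrs Q" "src Q a = tgt Q a" "src Q a \<in> {e1, en}"
    using assms by (auto simp: loop_pairsB_def)
  let ?v = "if src Q a = e1 then en else e1"
  have "(a, Triv ?v) \<in> special_pairs Q Z e1 en"
    using a e1_ne_en e1_vert en_vert by (auto simp: special_pairs_def basis_Triv_iff)
  moreover have "pstar e1 en (Triv ?v) = Triv e1" using e1_ne_en by simp
  ultimately show ?thesis using that by blast
qed

lemma special_pairs_image:
  "{(Arr [\<alpha>], pstar e1 en p) | \<alpha> p. (\<alpha>, p) \<in> special_pairs Q Z e1 en} = new_pairs \<union> loop_pairsB"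
proof
  show "{(Arr [\<alpha>], pstar e1 en p) | \<alpha> p. (\<alpha>, p) \<in> special_pairs Q Z e1 en} \<subseteq> new_pairs \<union> loop_pairsB"
    using special_pair_image_subset by blast
  show "new_pairs \<union> loop_pairsB \<subseteq> {(Arr [\<alpha>], pstar e1 en p) | \<alpha> p. (\<alpha>, p) \<in> special_pairs Q Z e1 en}"
  proof
    fix q assume q: "q \<in> new_pairs \<union> loop_pairsB"
    then have "q \<in> P1B" using new_pairs_subset loop_pairsB_subset by blast
    then obtain a y where "q = (Arr [a], y)" by (cases q) (auto simp: P1B_iff)
    then consider (new) "q \<in> new_pairs" | (loop) "q = (Arr [a], Triv e1)" "q \<in> loop_pairsB"
      using q by (auto simp: loop_pairsB_def)
    then show "q \<in> {(Arr [\<alpha>], pstar e1 en p) | \<alpha> p. (\<alpha>, p) \<in> special_pairs Q Z e1 en}"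
    proof cases
      case new
      then show ?thesis using new_pair_special \<open>q = (Arr [a], y)\<close> by force
    next
      case loop
      then obtain v where "(a, Triv v) \<in> special_pairs Q Z e1 en" "pstar e1 en (Triv v) = Triv e1"
        using loop_pair_special by blast
      then show ?thesis using loop by force
    qed
  qed
qed

lemma repl_glue_eq:
  assumes "g \<noteq> Triv en"
  shows "repl QB ZB a g u = repl Q Z a g u"
proof (cases u)
  case (Arr l)
  have "splice l i g \<noteq> Triv en" for i
    using assms by (auto simp: splice_def split: qpath.splits)
  then have "{i. i < length l \<and> l ! i = a \<and> splice l i g \<in> BB} = {i. i < length l \<and> l ! i = a \<and> splice l i g \<in> BA}"
    by (auto simp: pbasis_glue)
  then show ?thesis using Arr by (simp add: repl_def)
qed (simp add: repl_def)

lemma repl_glue_Znew: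
  assumes p: "(Arr [a], g) \<in> P1A - loop_pairsA" and bc: "[b, c] \<in> ZN"
  shows "repl QB ZB a g (Arr [b, c]) = 0"
proof -
  have pA: "a \<in> arrs Q" "g \<in> BA" "src Q a = psrc Q g" "tgt Q a = ptgt Q g"
    using p by (auto simp: P1A_iff)
  have Z: "tgt Q c \<in> {e1, en}" "src Q b \<in> {e1, en}" "tgt Q c \<noteq> src Q b"
    using bc Znew_pair_iff by auto
  have no_triv: "g \<noteq> Triv w" if "a \<in> {b, c}" for w
    using p pA Z that by (auto simp: loop_pairsA_def)
  have "splice [b, c] i g \<notin> BB" if "i < 2" "[b, c] ! i = a" for i
  proof (cases g)
    case (Arr m)
    have "m \<noteq> []" using pA(2) Arr basis_Arr by blast
    then show ?thesis
      using that pA(3,4) Arr Z(3) basis_Cons[of b m] basis_snoc[of m c]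
      by (cases i) (auto simp: splice_pair basis_Arr_glue_iff less_Suc_eq)
  next
    case (Triv w)
    then show ?thesis using that no_triv by (cases i) (auto simp: less_Suc_eq)
  qed
  then have none: "{i. i < length [b, c] \<and> [b, c] ! i = a \<and> splice [b, c] i g \<in> BB} = {}"
    by auto
  show ?thesis unfolding repl_def qpath.case none by simp
qed

lemma delta1_b_glue_eq:
  assumes p: "p \<in> P1A - loop_pairsA"
  shows "delta1_b QB ZB p = (delta1_b Q Z p :: _ \<Rightarrow> 'k::comm_ring_1)"
proof -
  obtain a g where ag: "p = (Arr [a], g)"
    using p by (metis DiffD1 P1A_iff surj_pair)
  have gn: "g \<noteq> Triv en" using P1A_loop_pairsA_not_en p ag by blast
  show ?thesis
  proof (rule ext, clarify)
    fix r y :: "('v,'a) qpath"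
    consider "r \<in> Arr ` Z" | "r \<notin> Arr ` Z" "r \<in> Arr ` ZN" | "r \<notin> Arr ` ZB"
      by (auto simp: glueZ_def)
    then show "delta1_b QB ZB p (r, y) = (delta1_b Q Z p (r, y) :: 'k)"
    proof cases
      case 1
      moreover have "r \<in> Arr ` ZB" using 1 by (auto simp: glueZ_def)
      moreover have "repl QB ZB a g r = (repl Q Z a g r :: _ \<Rightarrow> 'k)" by (rule repl_glue_eq[OF gn])
      ultimately show ?thesis using ag by (simp add: delta1_b_apply)
    next
      case 2
      then obtain b c where bc: "r = Arr [b, c]" "[b, c] \<in> ZN" using Znew_pair by blast
      then have "repl QB ZB a g r = (0 :: _ \<Rightarrow> 'k)" using repl_glue_Znew p ag by blast
      then show ?thesis using 2 ag by (simp add: delta1_b_apply glueZ_def)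
    next
      case 3
      then show ?thesis using ag by (auto simp: delta1_b_apply glueZ_def)
    qed
  qed
qed

lemma delta1_b_loop_power:
  assumes a: "a \<in> arrs Q" "src Q a = v" "tgt Q a = v"
    and m: "replicate m a \<in> Z" "m \<ge> 2"
    and p: "p \<in> P1A"
  shows "delta1_b Q Z p (Arr (replicate m a), Arr (replicate (m - 1) a))
       = (if p = (Arr [a], Triv v) then of_nat m else (0 :: 'k::comm_ring_1))"
proof -
  obtain b g where bg: "p = (Arr [b], g)" "g \<in> BA" "src Q b = psrc Q g" "tgt Q b = ptgt Q g"
    using p by (metis P1A_iff surj_pair)
  let ?I = "{i. i < m \<and> replicate m a ! i = b \<and> splice (replicate m a) i g \<in> BA \<and>
      splice (replicate m a) i g = Arr (replicate (m - 1) a)}"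
  have val: "delta1_b Q Z p (Arr (replicate m a), Arr (replicate (m - 1) a)) = (of_nat (card ?I) :: 'k)"
    using m(1) bg(1) by (simp add: delta1_b_apply repl_Arr_apply)
  have "?I = (if p = (Arr [a], Triv v) then {..<m} else {})"
  proof (cases g)
    case (Arr l)
    have "l \<noteq> []" using bg(2) Arr basis_Arr by blast
    have "splice (replicate m a) i g \<noteq> Arr (replicate (m - 1) a)" if "i < m" for i
    proof
      assume "splice (replicate m a) i g = Arr (replicate (m - 1) a)"
      then have "length (take i (replicate m a) @ l @ drop (Suc i) (replicate m a)) = m - 1"
        using Arr by (simp add: splice_def)
      then show False using \<open>l \<noteq> []\<close> that by (cases l) auto
    qed
    then show ?thesis using Arr bg(1) by auto
  next
    case (Triv w)
    have "splice (replicate m a) i g = Arr (replicate (m - 1) a)" if "i < m" for i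
      using that m(2) Triv take_drop_replicate[OF that, of a] by (simp add: splice_def)
    moreover have "b = a \<Longrightarrow> w = v" using bg a Triv by simp
    ultimately show ?thesis
      using bg(1) Triv basis_power_below_relation[OF a(1) _ m] a by auto
  qed
  then show ?thesis unfolding val by simp
qed

lemma delta1_b_glue_Znew_delete_loop:
  assumes a: "(Arr [a], Triv e1) \<in> loop_pairsB" and b: "b \<in> arrs Q" "b \<noteq> a"
    and r: "r \<in> ZN" "r = [a, b] \<or> r = [b, a]"
    and p: "p \<in> P1B"
  shows "delta1_b QB ZB p (Arr r, Arr [b]) = (if p = (Arr [a], Triv e1) then 1 else (0 :: 'k::comm_ring_1))"
proof -
  obtain x g where xg: "p = (Arr [x], g)" "g \<in> BB" "gm (src Q x) = gm (psrc Q g)"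
    using p by (metis P1B_iff surj_pair)
  have a_e1: "gm (src Q a) = e1" using a by (auto simp: loop_pairsB_def glue_map_def)
  have g_Arr: "m \<noteq> []" if "g = Arr m" for m
    using xg(2) that basis_Arr basis_Arr_glue_iff by blast
  let ?I = "{i. i < length r \<and> r ! i = x \<and> splice r i g \<in> BB \<and> splice r i g = Arr [b]}"
  have val: "delta1_b QB ZB p (Arr r, Arr [b]) = (of_nat (card ?I) :: 'k)"
    using r(1) xg(1) by (simp add: delta1_b_apply repl_Arr_apply glueZ_def)
  have hit: "x = a \<and> (\<exists>u. g = Triv u) \<longleftrightarrow> p = (Arr [a], Triv e1)"
    using xg a_e1 basis_Triv_glue_iff[of e1] e1_vert e1_ne_en
    by (cases g) (auto simp: basis_Triv_glue_iff)
  have "i \<in> ?I \<longleftrightarrow> i \<in> (if p = (Arr [a], Triv e1) then {if r = [a, b] then 0 else 1} else {})" for i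
  proof (cases "i = 0 \<or> i = 1")
    case True
    then show ?thesis
      unfolding hit[symmetric] using r(2) b g_Arr basis_single_iff[of b]
      by (cases g; elim disjE; elim disjE) (auto simp: splice_pair basis_Arr_glue_iff)
  next
    case False
    then show ?thesis using r(2) by auto
  qed
  then have "?I = (if p = (Arr [a], Triv e1) then {if r = [a, b] then 0 else 1} else {})"
    by blast
  then show ?thesis unfolding val by simp
qed

lemma Znew_with_loop:
  assumes a: "(Arr [a], Triv e1) \<in> loop_pairsB"
  obtains b r where "b \<in> arrs Q" "b \<noteq> a" "r \<in> ZN" "r = [a, b] \<or> r = [b, a]"
proof -
  define w where "w = (if src Q a = e1 then en else e1)"
  have a': "a \<in> arrs Q" "src Q a = tgt Q a" "src Q a \<in> {e1, en}"
    using a by (auto simp: loop_pairsB_def)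
  then have w: "w \<in> {e1, en}" "w \<noteq> src Q a" using e1_ne_en by (auto simp: w_def)
  have "non_isolated Q w" using e1_non_isolated en_non_isolated by (simp add: w_def)
  then obtain b where b: "b \<in> arrs Q" "src Q b = w \<or> tgt Q b = w"
    by (auto simp: non_isolated_def)
  have "b \<noteq> a" using b(2) w(2) a'(2) by auto
  moreover have "[a, b] \<in> ZN \<or> [b, a] \<in> ZN"
    using a' b w by (auto simp: Znew_pair_iff)
  ultimately show ?thesis using that b(1) by blast
qed

definition relation_parallels :: "(('v,'a) qpath \<times> ('v,'a) qpath) set" where
  "relation_parallels = {(r, y). r \<in> Arr ` Z \<and> psrc Q r = psrc Q y \<and> ptgt Q r = ptgt Q y}"

lemma delta1_b_vanish_nonparallel:
  assumes p: "p \<in> P1A"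
  shows "(delta1_b Q Z p :: _ \<Rightarrow> 'k::field) \<in> vanish (- relation_parallels)"
  unfolding vanish_def
proof (intro CollectI ballI)
  fix q assume q: "q \<in> - relation_parallels"
  obtain r y where q2: "q = (r, y)" by (cases q)
  obtain a g where ag: "p = (Arr [a], g)" "g \<in> BA" "src Q a = psrc Q g" "tgt Q a = ptgt Q g"
    using p by (metis P1A_iff surj_pair)
  show "(delta1_b Q Z p q :: 'k) = 0"
  proof (rule ccontr)
    assume "(delta1_b Q Z p q :: 'k) \<noteq> 0"
    then obtain l where l: "r = Arr l" "l \<in> Z" "(repl Q Z a g (Arr l) y :: 'k) \<noteq> 0"
      using q2 ag(1) by (auto simp: delta1_b_apply split: if_splits)
    from repl_nonzero_imp[OF this(3)]
    obtain i where i: "i < length l" "l ! i = a" "splice l i g = y" "y \<in> BA" by blast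
    have ap: "is_apath Q l" and len: "2 \<le> length l"
      using l(2) relation_apath relation_length by auto
    have "psrc Q y = src Q (last l) \<and> ptgt Q y = tgt Q (hd l)"
    proof (cases g)
      case (Triv w)
      then have "y = Arr (take i l @ drop (Suc i) l)" using i(1,3) len splice_Triv by metis
      then show ?thesis
        using splice_Triv_parallel_iff[OF ap i(1) len] i(2,4) basis_Arr ag Triv by auto
    next
      case (Arr m)
      then have "y = Arr (take i l @ m @ drop (Suc i) l)" using i(3) splice_Arr by metis
      moreover have "m \<noteq> []" using ag(2) Arr basis_Arr by blast
      ultimately show ?thesis
        using splice_Arr_parallel_iff[OF ap i(1)] i(2,4) basis_Arr ag Arr by auto
    qed
    then show False using q q2 l by (auto simp: relation_parallels_def)
  qed
qed

lemma delta1_b_new_pair_vanish_parallel: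
  assumes p: "p \<in> new_pairs"
  shows "(delta1_b QB ZB p :: _ \<Rightarrow> 'k::field) \<in> vanish relation_parallels"
  unfolding vanish_def
proof (intro CollectI ballI)
  fix q assume q: "q \<in> relation_parallels"
  then obtain l y where q2: "q = (Arr l, y)" "l \<in> Z" "psrc Q y = src Q (last l)" "ptgt Q y = tgt Q (hd l)"
    by (auto simp: relation_parallels_def)
  have "p \<in> P1B" using p new_pairs_subset by blast
  then obtain a g where ag: "p = (Arr [a], g)" "g \<in> BB"
    by (metis P1B_iff surj_pair)
  have gA: "g \<in> BA" using ag(2) pbasis_glue by blast
  show "(delta1_b QB ZB p q :: 'k) = 0"
  proof (rule ccontr)
    assume "(delta1_b QB ZB p q :: 'k) \<noteq> 0"
    then have "(repl QB ZB a g (Arr l) y :: 'k) \<noteq> 0"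
      using q2 ag(1) by (simp add: delta1_b_apply glueZ_def)
    from repl_nonzero_imp[OF this]
    obtain i where i: "i < length l" "l ! i = a" "splice l i g = y" "y \<in> BB" by blast
    have ap: "is_apath Q l" and len: "2 \<le> length l"
      using q2(2) relation_apath relation_length by auto
    have yA: "y \<in> BA" using i(4) pbasis_glue by blast
    show False
    proof (cases g)
      case (Arr m)
      then have "y = Arr (take i l @ m @ drop (Suc i) l)" using i(3) splice_Arr by metis
      moreover have "m \<noteq> []" using gA Arr basis_Arr by blast
      ultimately have "src Q (last m) = src Q a \<and> tgt Q (hd m) = tgt Q a"
        using splice_Arr_parallel_iff[OF ap i(1)] q2(3,4) yA i(2) basis_Arr by auto
      then show False using new_pair_not_parallel p ag(1) Arr by fastforce
    next
      case (Triv w)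
      then have "y = Arr (take i l @ drop (Suc i) l)" using i(1,3) len splice_Triv by metis
      then have "src Q a = tgt Q a"
        using splice_Triv_parallel_iff[OF ap i(1) len] q2(3,4) yA i(2) basis_Arr by auto
      then show False using new_pair_Triv_not_loop p ag(1) Triv by blast
    qed
  qed
qed

end

locale gluing_field = gluing Q Z e1 en
  for Q :: "('v,'a) quiver" and Z :: "'a list set" and e1 en :: 'v +
  fixes K :: "'k::field itself"
begin

abbreviation KerA :: "(('v,'a) qpath \<times> ('v,'a) qpath \<Rightarrow> 'k) set" where "KerA \<equiv> Ker1 Q Z"
abbreviation KerB :: "(('v,'a) qpath \<times> ('v,'a) qpath \<Rightarrow> 'k) set" where "KerB \<equiv> Ker1 QB ZB"
abbreviation ImA :: "(('v,'a) qpath \<times> ('v,'a) qpath \<Rightarrow> 'k) set" where "ImA \<equiv> Im0 Q Z"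
abbreviation ImB :: "(('v,'a) qpath \<times> ('v,'a) qpath \<Rightarrow> 'k) set" where "ImB \<equiv> Im0 QB ZB"

(* A loop a at one glued vertex and an arrow b at the other one form a new relation ab or ba
   (here non-isolatedness is used); deleting a from it detects the coefficient of a*\<parallel>f1 alone. *)

lemma KerB_vanish_loop_pairsB: "KerB \<subseteq> vanish loop_pairsB"
proof
  fix f assume f: "f \<in> KerB"
  show "f \<in> vanish loop_pairsB"
    unfolding vanish_def
  proof (intro CollectI ballI)
    fix p0 assume p0: "p0 \<in> loop_pairsB"
    then obtain a where a: "p0 = (Arr [a], Triv e1)" by (auto simp: loop_pairsB_def)
    obtain b r where br: "b \<in> arrs Q" "b \<noteq> a" "r \<in> ZN" "r = [a, b] \<or> r = [b, a]"
      using Znew_with_loop p0 a by blast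
    have "delta1 QB ZB f (Arr r, Arr [b]) = f p0 * 1"
      unfolding delta1_def using p0 loop_pairsB_subset a
      by (intro lin_ext_apply_delta[OF finite_P1B]) (auto simp: delta1_b_glue_Znew_delete_loop br)
    moreover have "delta1 QB ZB f = 0" using f by (simp add: Ker1_def)
    ultimately show "f p0 = 0" by simp
  qed
qed

lemma delta1_glue_eq:
  assumes "(f :: _ \<Rightarrow> 'k) \<in> spanned (P1A - loop_pairsA)"
  shows "delta1 QB ZB f = delta1 Q Z f"
proof -
  have "delta1 QB ZB f = lin_ext (P1A - loop_pairsA) (delta1_b QB ZB) f"
    unfolding delta1_def using P1A_loop_pairsA_subset assms
    by (intro lin_ext_restrict_spanned finite_P1B) auto
  also have "\<dots> = lin_ext (P1A - loop_pairsA) (delta1_b Q Z) f"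
    by (rule lin_ext_cong) (rule delta1_b_glue_eq)
  also have "\<dots> = delta1 Q Z f"
    unfolding delta1_def using assms by (intro lin_ext_restrict_spanned[symmetric] finite_P1A) auto
  finally show ?thesis .
qed

(* A cocycle of B vanishes on the loop pairs, so it splits along
   P1B - loop_pairsB = (P1A - loop_pairsA) \<union> new_pairs.  The differential of the first part
   takes values parallel to relations of A, that of the second part values that are not, so both
   parts are cocycles. *)

lemma KerB_split:
  assumes f: "f \<in> KerB"
  obtains f1 f2 where "f = f1 + f2" "f1 \<in> KerA \<inter> spanned (P1A - loop_pairsA)"
    "f2 \<in> KerB \<inter> spanned new_pairs"
proof -
  define f1 where "f1 = (\<lambda>q. if q \<in> P1A - loop_pairsA then f q else 0)"
  define f2 where "f2 = (\<lambda>q. if q \<in> new_pairs then f q else 0)"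
  have fB: "f \<in> spanned P1B" "delta1 QB ZB f = 0" using f by (auto simp: Ker1_def)
  have "f \<in> vanish loop_pairsB" using KerB_vanish_loop_pairsB f by blast
  then have sum: "f = f1 + f2"
    using fB(1) P1B_loop_pairsB_eq new_pairs_disjoint
    by (auto simp: fun_eq_iff f1_def f2_def spanned_def vanish_def)
  have f1s: "f1 \<in> spanned (P1A - loop_pairsA)" and f2s: "f2 \<in> spanned new_pairs"
    by (simp_all add: f1_def f2_def spanned_def)
  have "delta1 Q Z f1 \<in> vanish (- relation_parallels)"
    unfolding delta1_def by (rule lin_ext_vanish) (rule delta1_b_vanish_nonparallel)
  moreover have "delta1 QB ZB f2 \<in> vanish relation_parallels"
  proof -
    have "delta1 QB ZB f2 = lin_ext new_pairs (delta1_b QB ZB) f2"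
      unfolding delta1_def using new_pairs_subset f2s by (intro lin_ext_restrict_spanned finite_P1B)
    also have "\<dots> \<in> vanish relation_parallels"
      by (rule lin_ext_vanish) (rule delta1_b_new_pair_vanish_parallel)
    finally show ?thesis .
  qed
  moreover have "delta1 Q Z f1 + delta1 QB ZB f2 = 0"
    using sum fB(2) delta1_glue_eq[OF f1s] by (simp add: delta1_def lin_ext_add)
  ultimately have "delta1 Q Z f1 = 0" "delta1 QB ZB f2 = 0"
    by (rule vanish_add_eq_0)+
  moreover have "f1 \<in> spanned P1A" "f2 \<in> spanned P1B"
    using f1s f2s new_pairs_subset spanned_mono[of "P1A - loop_pairsA" P1A] spanned_mono[of new_pairs P1B]
    by auto
  ultimately show ?thesis using that sum f1s f2s by (simp add: Ker1_def)
qed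

lemma Zspp_eq: "Zspp K Q Z e1 en = KerB \<inter> spanned new_pairs"
proof -
  have fin: "finite (new_pairs \<union> loop_pairsB)"
    using new_pairs_subset loop_pairsB_subset finite_P1B finite_subset by blast
  have "{pt (Arr [\<alpha>]) (pstar e1 en p) | \<alpha> p. (\<alpha>, p) \<in> special_pairs Q Z e1 en}
     = (vind ` (new_pairs \<union> loop_pairsB) :: (_ \<Rightarrow> 'k) set)"
    unfolding special_pairs_image[symmetric] by (auto simp: pt_def)
  then have "Zspp K Q Z e1 en = KerB \<inter> spanned (new_pairs \<union> loop_pairsB)"
    unfolding Zspp_def kspan_def spanned_eq_span[OF fin] by simp
  moreover have "f \<in> spanned (new_pairs \<union> loop_pairsB) \<longleftrightarrow> f \<in> spanned new_pairs" if "f \<in> KerB" for f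
    using subsetD[OF KerB_vanish_loop_pairsB that] by (auto simp: spanned_def vanish_def)
  ultimately show ?thesis by blast
qed

end

locale gluing_char = gluing_field Q Z e1 en K
  for Q :: "('v,'a) quiver" and Z :: "'a list set" and e1 en :: 'v and K :: "'k::field itself" +
  assumes loop_power_char: "\<forall>\<alpha>\<in>arrs Q. src Q \<alpha> = tgt Q \<alpha> \<and> src Q \<alpha> \<in> {e1, en} \<longrightarrow>
    (\<forall>m::nat. m \<ge> 2 \<and> replicate m \<alpha> \<in> Z \<longrightarrow> \<not> CHAR('k) dvd m)"
begin

(* delta1(\<alpha>\<parallel>e) has coefficient m at \<alpha>^m\<parallel>\<alpha>^(m-1), and no other basis pair
   reaches this coordinate; this is where m must be invertible in k. *)

lemma KerA_vanish_loop_pairsA: "KerA \<subseteq> vanish loop_pairsA"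
proof
  fix f assume f: "f \<in> KerA"
  show "f \<in> vanish loop_pairsA"
    unfolding vanish_def
  proof (intro CollectI ballI)
    fix p0 assume p0: "p0 \<in> loop_pairsA"
    then obtain a v where av: "p0 = (Arr [a], Triv v)" "a \<in> arrs Q" "src Q a = v" "tgt Q a = v" "v \<in> {e1, en}"
      by (auto simp: loop_pairsA_def)
    have "src Q a = tgt Q a" using av by simp
    then obtain m where m: "m \<ge> 2" "replicate m a \<in> Z" by (rule loop_power_relation[OF av(2)])
    have "(of_nat m :: 'k) \<noteq> 0"
      using loop_power_char av m by (simp add: of_nat_eq_0_iff_char_dvd)
    moreover have "p0 \<in> P1A" using p0 loop_pairsA_subset by blast
    then have "delta1 Q Z f (Arr (replicate m a), Arr (replicate (m - 1) a)) = f p0 * of_nat m"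
      unfolding delta1_def av(1)
      by (intro lin_ext_apply_delta[OF finite_P1A] delta1_b_loop_power[OF av(2-4) m(2,1)])
    moreover have "delta1 Q Z f = 0" using f by (simp add: Ker1_def)
    ultimately show "f p0 = 0" by simp
  qed
qed

lemma KerA_subset_spanned: "KerA \<subseteq> spanned (P1A - loop_pairsA)"
  using KerA_vanish_loop_pairsA by (auto simp: Ker1_def spanned_def vanish_def)

lemma KerA_subset_KerB: "KerA \<subseteq> KerB"
proof
  fix f assume f: "f \<in> KerA"
  then have fs: "f \<in> spanned (P1A - loop_pairsA)" using KerA_subset_spanned by blast
  then have "f \<in> spanned P1B"
    using spanned_mono[OF P1A_loop_pairsA_subset] spanned_mono[of "P1B - loop_pairsB" P1B] by blast
  moreover have "delta1 QB ZB f = 0" using delta1_glue_eq[OF fs] f by (simp add: Ker1_def)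
  ultimately show "f \<in> KerB" by (simp add: Ker1_def)
qed

lemma KerB_direct_sum: "KerB = {x + y | x y. x \<in> KerA \<and> y \<in> KerB \<inter> spanned new_pairs}"
proof
  show "KerB \<subseteq> {x + y | x y. x \<in> KerA \<and> y \<in> KerB \<inter> spanned new_pairs}"
  proof
    fix f assume "f \<in> KerB"
    then obtain f1 f2 where "f = f1 + f2" "f1 \<in> KerA" "f2 \<in> KerB \<inter> spanned new_pairs"
      by (rule KerB_split) blast
    then show "f \<in> {x + y | x y. x \<in> KerA \<and> y \<in> KerB \<inter> spanned new_pairs}" by blast
  qed
  show "{x + y | x y. x \<in> KerA \<and> y \<in> KerB \<inter> spanned new_pairs} \<subseteq> KerB"
    using KerA_subset_KerB FS.subspace_add[OF subspace_Ker1] by blast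
qed

lemma kdim_KerB: "kdim KerB = kdim KerA + kspp K Q Z e1 en"
proof -
  have "KerA \<inter> (KerB \<inter> spanned new_pairs) \<subseteq> spanned (P1A - loop_pairsA) \<inter> spanned new_pairs"
    using KerA_subset_spanned by blast
  also have "\<dots> \<subseteq> {0}"
    using new_pairs_disjoint by (force simp: spanned_def fun_eq_iff)
  finally have "KerA \<inter> (KerB \<inter> spanned new_pairs) \<subseteq> {0}" .
  moreover have "KerA \<subseteq> FS.span (vind ` P1B)" "KerB \<inter> spanned new_pairs \<subseteq> FS.span (vind ` P1B)"
    using KerA_subset_KerB spanned_eq_span[OF finite_P1B] by (auto simp: Ker1_def)
  moreover have "FS.subspace (KerB \<inter> spanned new_pairs)"
    using subspace_Ker1 subspace_spanned by (rule FS.subspace_inter)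
  ultimately have "FS.dim KerB = FS.dim KerA + FS.dim (KerB \<inter> spanned new_pairs)"
    using dim_direct_sum[OF subspace_Ker1] finite_P1B by (subst KerB_direct_sum) blast
  then show ?thesis unfolding kspp_def Zspp_eq kdim_eq_dim .
qed

end

section \<open>The zeroth differential\<close>

context gluing
begin

abbreviation "P0A \<equiv> par Q (Q0 Q) BA"
abbreviation "P0B \<equiv> par QB (Q0 QB) BB"

lemma P0A_iff:
  "(x, \<gamma>) \<in> P0A \<longleftrightarrow> (\<exists>v\<in>verts Q. x = Triv v \<and> \<gamma> \<in> BA \<and> psrc Q \<gamma> = v \<and> ptgt Q \<gamma> = v)"
  by (auto simp: par_def Q0_def)

lemma P0B_iff:
  "(x, \<gamma>) \<in> P0B \<longleftrightarrow> (\<exists>v\<in>verts Q - {en}. x = Triv v \<and> \<gamma> \<in> BB \<and> gm (psrc Q \<gamma>) = v \<and> gm (ptgt Q \<gamma>) = v)"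
  using psrc_glue ptgt_glue glue_verts by (auto simp: par_def Q0_def)

lemma finite_P0A: "finite P0A"
  using finite_verts finite_BA
  by (auto simp: par_def Q0_def intro: finite_subset[of _ "Q0 Q \<times> BA"])

lemma finite_P0B: "finite P0B"
proof (rule finite_subset)
  show "P0B \<subseteq> Q0 QB \<times> BB" by (auto simp: par_def)
  show "finite (Q0 QB \<times> BB)" using finite_verts finite_BB by (simp add: Q0_def)
qed

(* Besides the cycles e\<parallel>\<gamma> and the trivial cycles e\<parallel>e already present in A,
   the zeroth cochains of B contain the pairs f1\<parallel>p for the paths p between e1 and en,
   which become cycles at f1. *)

definition cycle_pairsA :: "(('v,'a) qpath \<times> ('v,'a) qpath) set" where
  "cycle_pairsA = {(Triv (src Q (last l)), Arr l) | l. Arr l \<in> BA \<and> src Q (last l) = tgt Q (hd l)}"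

definition vertex_pairs :: "'v set \<Rightarrow> (('v,'a) qpath \<times> ('v,'a) qpath) set" where
  "vertex_pairs V = (\<lambda>v. (Triv v, Triv v)) ` V"

definition new_cycle_pairs :: "(('v,'a) qpath \<times> ('v,'a) qpath) set" where
  "new_cycle_pairs = {(Triv e1, Arr l) | l. Arr l \<in> BA \<and> src Q (last l) \<noteq> tgt Q (hd l) \<and>
     src Q (last l) \<in> {e1, en} \<and> tgt Q (hd l) \<in> {e1, en}}"

definition glue_pair :: "('v,'a) qpath \<times> ('v,'a) qpath \<Rightarrow> ('v,'a) qpath \<times> ('v,'a) qpath" where
  "glue_pair p = (Triv (gm (psrc Q (snd p))), snd p)"

lemma src_last_vert: "Arr l \<in> BA \<Longrightarrow> src Q (last l) \<in> verts Q"
  using basis_Arr[of l] src_vert by (auto simp: is_apath_def intro: last_in_set)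

lemma P0A_split: "P0A = cycle_pairsA \<union> vertex_pairs (verts Q)"
proof (rule set_eqI, clarify)
  fix x \<gamma>
  show "(x, \<gamma>) \<in> P0A \<longleftrightarrow> (x, \<gamma>) \<in> cycle_pairsA \<union> vertex_pairs (verts Q)"
    using src_last_vert
    by (cases \<gamma>) (auto simp: P0A_iff cycle_pairsA_def vertex_pairs_def basis_Triv_iff)
qed

lemma P0B_split: "P0B = glue_pair ` cycle_pairsA \<union> vertex_pairs (verts Q - {en}) \<union> new_cycle_pairs"
proof (rule set_eqI, clarify)
  fix x \<gamma>
  have "(x, Arr l) \<in> P0B \<longleftrightarrow> (x, Arr l) \<in> glue_pair ` cycle_pairsA \<union> new_cycle_pairs" for l
  proof (cases "Arr l \<in> BA \<and> src Q (last l) = tgt Q (hd l)")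
    case True
    then have "gm (src Q (last l)) \<in> gm ` verts Q" using src_last_vert by blast
    then have "gm (tgt Q (hd l)) \<in> verts Q - {en}" using True glue_verts by simp
    then have "(x, Arr l) \<in> P0B \<longleftrightarrow> x = Triv (gm (tgt Q (hd l)))"
      using True by (auto simp: P0B_iff basis_Arr_glue_iff)
    moreover have "(Triv (src Q (last l)), Arr l) \<in> cycle_pairsA"
      using True by (auto simp: cycle_pairsA_def)
    then have "(x, Arr l) \<in> glue_pair ` cycle_pairsA \<longleftrightarrow> x = Triv (gm (tgt Q (hd l)))"
      using True by (force simp: glue_pair_def cycle_pairsA_def)
    moreover have "(x, Arr l) \<notin> new_cycle_pairs" using True by (auto simp: new_cycle_pairs_def)
    ultimately show ?thesis by blast
  next
    case False
    then have "(x, Arr l) \<in> P0B \<longleftrightarrow> (x, Arr l) \<in> new_cycle_pairs"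
      using e1_vert e1_ne_en
      by (auto simp: P0B_iff basis_Arr_glue_iff new_cycle_pairs_def glue_map_def split: if_splits)
    then show ?thesis using False by (auto simp: glue_pair_def cycle_pairsA_def)
  qed
  moreover have "(x, Triv w) \<notin> glue_pair ` cycle_pairsA \<union> new_cycle_pairs" for w
    by (auto simp: glue_pair_def cycle_pairsA_def new_cycle_pairs_def)
  moreover have "(x, Arr l) \<notin> vertex_pairs V" for l V
    by (auto simp: vertex_pairs_def)
  ultimately show "(x, \<gamma>) \<in> P0B \<longleftrightarrow> (x, \<gamma>) \<in> glue_pair ` cycle_pairsA \<union> vertex_pairs (verts Q - {en}) \<union> new_cycle_pairs"
    by (cases \<gamma>) (auto simp: P0B_iff basis_Triv_glue_iff vertex_pairs_def)
qed

lemma finite_cycle_pairsA: "finite cycle_pairsA"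
  using finite_P0A P0A_split by (metis finite_Un)

lemma finite_new_cycle_pairs: "finite new_cycle_pairs"
  using finite_P0B P0B_split by (metis finite_Un)

lemma delta0_b_glue_cycle:
  assumes p: "p \<in> cycle_pairsA"
  shows "delta0_b QB ZB (glue_pair p) = delta0_b Q Z p"
proof -
  obtain l where l: "p = (Triv (src Q (last l)), Arr l)" "Arr l \<in> BA" "src Q (last l) = tgt Q (hd l)"
    using p by (auto simp: cycle_pairsA_def)
  have "l \<noteq> []" using l(2) basis_Arr by blast
  then have "{a \<in> arrs QB. src QB a = psrc QB (fst (glue_pair p)) \<and> pcomp (Arr [a]) (Arr l) \<in> BB}
      = {a \<in> arrs Q. src Q a = psrc Q (fst p) \<and> pcomp (Arr [a]) (Arr l) \<in> BA}"
    and "{a \<in> arrs QB. tgt QB a = psrc QB (fst (glue_pair p)) \<and> pcomp (Arr l) (Arr [a]) \<in> BB}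
      = {a \<in> arrs Q. tgt Q a = psrc Q (fst p) \<and> pcomp (Arr l) (Arr [a]) \<in> BA}"
    using basis_Cons[of _ l] basis_snoc[of l] l by (auto simp: basis_Arr_glue_iff glue_pair_def)
  then show ?thesis using l(1) by (simp add: delta0_b_def glue_pair_def)
qed

definition parallel_pairs :: "(('v,'a) qpath \<times> ('v,'a) qpath) set" where
  "parallel_pairs = {(x, y). psrc Q x = psrc Q y \<and> ptgt Q x = ptgt Q y}"

lemma delta0_b_cycle_support:
  assumes p: "p \<in> cycle_pairsA"
  shows "(delta0_b Q Z p :: _ \<Rightarrow> 'k::field) \<in> vanish (- (parallel_pairs - Id))"
  unfolding vanish_def
proof (intro CollectI ballI)
  fix q assume q: "q \<in> - (parallel_pairs - Id)"
  obtain l where l: "p = (Triv (src Q (last l)), Arr l)" "Arr l \<in> BA" "src Q (last l) = tgt Q (hd l)"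
    using p by (auto simp: cycle_pairsA_def)
  have "l \<noteq> []" using l(2) basis_Arr by blast
  show "(delta0_b Q Z p q :: 'k) = 0"
  proof (rule ccontr)
    assume "(delta0_b Q Z p q :: 'k) \<noteq> 0"
    then obtain a where "(q = (Arr [a], Arr (a # l)) \<and> Arr (a # l) \<in> BA) \<or>
        (q = (Arr [a], Arr (l @ [a])) \<and> Arr (l @ [a]) \<in> BA)"
      using delta0_b_nonzero_imp l(1) by fastforce
    then have "q \<in> parallel_pairs - Id"
      using basis_Cons[of a l] basis_snoc[of l a] \<open>l \<noteq> []\<close> l(3) by (auto simp: parallel_pairs_def)
    then show False using q by blast
  qed
qed

lemma delta0_b_vertex_support:
  "(delta0_b Q' Z' (Triv v, Triv v) :: _ \<Rightarrow> 'k::field) \<in> vanish (- Id)"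
  using delta0_b_nonzero_imp[of Q' Z' "Triv v" "Triv v"] by (fastforce simp: vanish_def)

lemma delta0_b_new_cycle_support:
  assumes p: "p \<in> new_cycle_pairs"
  shows "(delta0_b QB ZB p :: _ \<Rightarrow> 'k::field) \<in> vanish parallel_pairs"
  unfolding vanish_def
proof (intro CollectI ballI)
  fix q assume q: "q \<in> parallel_pairs"
  obtain l where l: "p = (Triv e1, Arr l)" "Arr l \<in> BA" "src Q (last l) \<noteq> tgt Q (hd l)"
    using p by (auto simp: new_cycle_pairs_def)
  have "l \<noteq> []" using l(2) basis_Arr by blast
  show "(delta0_b QB ZB p q :: 'k) = 0"
  proof (rule ccontr)
    assume "(delta0_b QB ZB p q :: 'k) \<noteq> 0"
    then obtain a where "(q = (Arr [a], Arr (a # l)) \<and> Arr (a # l) \<in> BA) \<or>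
        (q = (Arr [a], Arr (l @ [a])) \<and> Arr (l @ [a]) \<in> BA)"
      using delta0_b_nonzero_imp l(1) by (fastforce simp: basis_Arr_glue_iff)
    then have "q \<notin> parallel_pairs"
      using basis_Cons[of a l] basis_snoc[of l a] \<open>l \<noteq> []\<close> l(3) by (auto simp: parallel_pairs_def)
    then show False using q by blast
  qed
qed

(* A common support element would be a path a l = l' a, whose first arrow closes up the
   path l' between e1 and en. *)

lemma delta0_b_new_cycle_disjoint:
  assumes "(Triv e1, Arr l) \<in> new_cycle_pairs" "(Triv e1, Arr l') \<in> new_cycle_pairs" "l \<noteq> l'"
  shows "(delta0_b QB ZB (Triv e1, Arr l) q :: 'k::field) = 0 \<or> (delta0_b QB ZB (Triv e1, Arr l') q :: 'k) = 0"
proof (rule ccontr)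
  assume "\<not> ?thesis"
  then have nz: "(delta0_b QB ZB (Triv e1, Arr l) q :: 'k) \<noteq> 0" "(delta0_b QB ZB (Triv e1, Arr l') q :: 'k) \<noteq> 0"
    by auto
  have l: "l \<noteq> []" "src Q (last l) \<noteq> tgt Q (hd l)" and l': "l' \<noteq> []" "src Q (last l') \<noteq> tgt Q (hd l')"
    using assms basis_Arr by (auto simp: new_cycle_pairs_def)
  have cross: False if "a # m = m' @ [a]" "Arr (m' @ [a]) \<in> BA" "m' \<noteq> []" "src Q (last m') \<noteq> tgt Q (hd m')"
    for a m m'
    using that basis_snoc[OF that(2,3)] by (cases m') auto
  obtain a where a: "(q = (Arr [a], Arr (a # l)) \<and> Arr (a # l) \<in> BA) \<or> (q = (Arr [a], Arr (l @ [a])) \<and> Arr (l @ [a]) \<in> BA)"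
    using delta0_b_nonzero_imp[OF nz(1)] by (auto simp: basis_Arr_glue_iff)
  obtain b where b: "(q = (Arr [b], Arr (b # l')) \<and> Arr (b # l') \<in> BA) \<or> (q = (Arr [b], Arr (l' @ [b])) \<and> Arr (l' @ [b]) \<in> BA)"
    using delta0_b_nonzero_imp[OF nz(2)] by (auto simp: basis_Arr_glue_iff)
  show False
    using a b assms(3) cross[of a l l'] cross[of a l' l] l l' by auto
qed

lemma no_new_cycle_pairs: "\<not> same_block Q e1 en \<Longrightarrow> new_cycle_pairs = {}"
  using is_apath_ends_connected[OF conjunct1[OF basis_Arr]] adj_rtrancl_sym e1_vert en_vert
  by (fastforce simp: new_cycle_pairs_def same_block_def conn_rel_def)

lemma delta0_b_vertex_glue:
  "delta0_b QB ZB (Triv v, Triv v) q = (if \<exists>b\<in>arrs Q. q = (Arr [b], Arr [b])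
     then (if gm (src Q (arrow_of (fst q))) = v then 1 else 0) - (if gm (tgt Q (arrow_of (fst q))) = v then 1 else 0)
     else (0 :: 'k::comm_ring_1))"
proof -
  have "Arr [a] \<in> BB \<longleftrightarrow> a \<in> arrs QB" for a
    using basis_Arr_glue_iff basis_single_iff by simp
  with finite_arrs have "(delta0_b QB ZB (Triv v, Triv v) q :: 'k) = (if \<exists>b\<in>arrs QB. q = (Arr [b], Arr [b])
     then (if src QB (arrow_of (fst q)) = v then 1 else 0) - (if tgt QB (arrow_of (fst q)) = v then 1 else 0)
     else 0)"
    by (intro delta0_b_vertex) simp_all
  then show ?thesis by simp
qed

lemma delta0_b_vertex_glue_other:
  "v \<noteq> e1 \<Longrightarrow> v \<noteq> en \<Longrightarrow> delta0_b QB ZB (Triv v, Triv v) = (delta0_b Q Z (Triv v, Triv v) :: _ \<Rightarrow> 'k::comm_ring_1)"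
  by (rule ext) (simp add: delta0_b_vertex_glue delta0_b_vertex[OF finite_arrs basis_single_iff] glue_map_def)

lemma delta0_b_vertex_glue_e1:
  "delta0_b QB ZB (Triv e1, Triv e1)
     = (delta0_b Q Z (Triv e1, Triv e1) + delta0_b Q Z (Triv en, Triv en) :: _ \<Rightarrow> 'k::comm_ring_1)"
  using e1_ne_en
  by (intro ext) (simp add: delta0_b_vertex_glue delta0_b_vertex[OF finite_arrs basis_single_iff] glue_map_def)

end

context gluing_field
begin

abbreviation vertex_dA :: "'v \<Rightarrow> ('v,'a) qpath \<times> ('v,'a) qpath \<Rightarrow> 'k" where
  "vertex_dA v \<equiv> delta0_b Q Z (Triv v, Triv v)"
abbreviation vertex_dB :: "'v \<Rightarrow> ('v,'a) qpath \<times> ('v,'a) qpath \<Rightarrow> 'k" where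
  "vertex_dB v \<equiv> delta0_b QB ZB (Triv v, Triv v)"
abbreviation cycle_images :: "(('v,'a) qpath \<times> ('v,'a) qpath \<Rightarrow> 'k) set" where
  "cycle_images \<equiv> delta0_b Q Z ` cycle_pairsA"
abbreviation new_cycle_images :: "(('v,'a) qpath \<times> ('v,'a) qpath \<Rightarrow> 'k) set" where
  "new_cycle_images \<equiv> delta0_b QB ZB ` new_cycle_pairs"

lemma ImA_eq: "ImA = FS.span (cycle_images \<union> vertex_dA ` verts Q)"
proof -
  have "ImA = FS.span (delta0_b Q Z ` P0A)"
    unfolding Im0_def delta0_def by (rule lin_ext_image[OF finite_P0A])
  then show ?thesis unfolding P0A_split image_Un vertex_pairs_def image_image .
qed

lemma ImB_eq: "ImB = FS.span ((cycle_images \<union> vertex_dB ` (verts Q - {en})) \<union> new_cycle_images)"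
proof -
  have "ImB = FS.span (delta0_b QB ZB ` P0B)"
    unfolding Im0_def delta0_def by (rule lin_ext_image[OF finite_P0B])
  moreover have "delta0_b QB ZB ` glue_pair ` cycle_pairsA = cycle_images"
    unfolding image_image by (rule image_cong[OF refl]) (rule delta0_b_glue_cycle)
  ultimately show ?thesis unfolding P0B_split image_Un vertex_pairs_def image_image by simp
qed

lemma cycle_images_vanish: "cycle_images \<subseteq> vanish (- (parallel_pairs - Id))"
  by (rule image_subsetI) (rule delta0_b_cycle_support)

lemma cycle_images_vanish_diagonal: "cycle_images \<subseteq> vanish Id"
  by (rule subset_trans[OF cycle_images_vanish vanish_antimono]) blast

lemma cycle_images_vanish_nonparallel: "cycle_images \<subseteq> vanish (- parallel_pairs)"
  by (rule subset_trans[OF cycle_images_vanish vanish_antimono]) blast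

lemma vertex_images_vanish_offdiagonal: "(\<lambda>v. delta0_b Q' Z' (Triv v, Triv v)) ` V \<subseteq> vanish (- Id)"
  by (rule image_subsetI) (rule delta0_b_vertex_support)

lemma vertex_images_vanish_nonparallel: "vertex_dB ` V \<subseteq> vanish (- parallel_pairs)"
proof -
  have "- parallel_pairs \<subseteq> - Id" by (auto simp: parallel_pairs_def)
  then show ?thesis by (rule subset_trans[OF vertex_images_vanish_offdiagonal vanish_antimono])
qed

lemma kdim_ImA: "kdim ImA = FS.dim (FS.span cycle_images) + FS.dim (FS.span (vertex_dA ` verts Q))"
  unfolding kdim_eq_dim ImA_eq
  by (rule dim_span_Un_vanish[OF finite_imageI[OF finite_cycle_pairsA] finite_imageI[OF finite_verts]
        cycle_images_vanish_diagonal vertex_images_vanish_offdiagonal])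

lemma kdim_ImB:
  "kdim ImB = FS.dim (FS.span cycle_images) + FS.dim (FS.span (vertex_dB ` (verts Q - {en})))
     + FS.dim (FS.span new_cycle_images)"
proof -
  have fin: "finite (vertex_dB ` (verts Q - {en}))" using finite_verts by simp
  have new: "new_cycle_images \<subseteq> vanish (- (- parallel_pairs))"
    unfolding double_compl by (rule image_subsetI) (rule delta0_b_new_cycle_support)
  have old: "cycle_images \<union> vertex_dB ` (verts Q - {en}) \<subseteq> vanish (- parallel_pairs)"
    using cycle_images_vanish_nonparallel vertex_images_vanish_nonparallel by (rule Un_least)
  have "kdim ImB = FS.dim (FS.span (cycle_images \<union> vertex_dB ` (verts Q - {en})))
      + FS.dim (FS.span new_cycle_images)"
    unfolding kdim_eq_dim ImB_eq
    using finite_imageI[OF finite_cycle_pairsA] fin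
    by (intro dim_span_Un_vanish[OF _ finite_imageI[OF finite_new_cycle_pairs] old new]) simp
  also have "FS.dim (FS.span (cycle_images \<union> vertex_dB ` (verts Q - {en})))
      = FS.dim (FS.span cycle_images) + FS.dim (FS.span (vertex_dB ` (verts Q - {en})))"
    by (rule dim_span_Un_vanish[OF finite_imageI[OF finite_cycle_pairsA] fin
          cycle_images_vanish_diagonal vertex_images_vanish_offdiagonal])
  finally show ?thesis .
qed

lemma special_paths_eq:
  "special_paths K Q Z e1 en = {p. (Triv e1, p) \<in> new_cycle_pairs \<and> (delta0_b QB ZB (Triv e1, p) :: _ \<Rightarrow> 'k) \<noteq> 0}"
proof (rule set_eqI)
  fix p :: "('v,'a) qpath"
  show "p \<in> special_paths K Q Z e1 en \<longleftrightarrow>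
      p \<in> {p. (Triv e1, p) \<in> new_cycle_pairs \<and> (delta0_b QB ZB (Triv e1, p) :: _ \<Rightarrow> 'k) \<noteq> 0}"
  proof (cases p)
    case (Triv v)
    then show ?thesis using e1_ne_en by (auto simp: special_paths_def new_cycle_pairs_def)
  next
    case (Arr l)
    have "(Triv e1, p) \<in> new_cycle_pairs \<longleftrightarrow>
        p \<in> BA \<and> ((psrc Q p = e1 \<and> ptgt Q p = en) \<or> (psrc Q p = en \<and> ptgt Q p = e1))"
      using Arr e1_ne_en by (auto simp: new_cycle_pairs_def)
    moreover have "delta0 QB ZB (pt (Triv e1) p) = (delta0_b QB ZB (Triv e1, p) :: _ \<Rightarrow> 'k)"
      if "(Triv e1, p) \<in> new_cycle_pairs"
      unfolding delta0_def pt_def using that P0B_split by (intro lin_ext_vind finite_P0B) blast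
    ultimately show ?thesis using Arr e1_ne_en by (auto simp: special_paths_def)
  qed
qed

lemma dim_new_cycle_images: "FS.dim (FS.span new_cycle_images) = sp K Q Z e1 en"
proof -
  let ?F = "\<lambda>p. (delta0_b QB ZB (Triv e1, p) :: _ \<Rightarrow> 'k)"
  let ?S = "special_paths K Q Z e1 en"
  have nonzero: "new_cycle_images - {0} = ?F ` ?S"
    unfolding special_paths_eq by (force simp: new_cycle_pairs_def)
  have "?F p q = 0 \<or> ?F p' q = 0" if S: "p \<in> ?S" "p' \<in> ?S" and ne: "p \<noteq> p'" for p p' q
  proof -
    obtain l l' where "p = Arr l" "p' = Arr l'"
        "(Triv e1, Arr l) \<in> new_cycle_pairs" "(Triv e1, Arr l') \<in> new_cycle_pairs"
      using S unfolding special_paths_eq by (auto simp: new_cycle_pairs_def)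
    then show ?thesis using delta0_b_new_cycle_disjoint ne by blast
  qed
  then have "FS.dim (FS.span (?F ` ?S)) = card ?S"
    by (intro dim_span_disjoint_supports) (auto simp: special_paths_eq)
  moreover have "FS.span new_cycle_images = FS.span (?F ` ?S)"
    by (subst FS.span_delete_0[symmetric]) (simp only: nonzero)
  ultimately show ?thesis by (simp add: sp_def)
qed

lemma sp_not_same_block: "\<not> same_block Q e1 en \<Longrightarrow> sp K Q Z e1 en = 0"
  using no_new_cycle_pairs by (simp add: sp_def special_paths_eq)

lemma span_vertex_dA:
  "FS.span (vertex_dA ` verts Q) = FS.span (insert (vertex_dA e1) (vertex_dB ` (verts Q - {en})))"
proof -
  let ?T = "vertex_dA ` (verts Q - {e1, en})"
  have A: "vertex_dA ` verts Q = insert (vertex_dA e1) (insert (vertex_dA en) ?T)"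
    using e1_vert en_vert by blast
  have "vertex_dB ` (verts Q - {e1, en}) = ?T"
    by (rule image_cong[OF refl]) (auto intro: delta0_b_vertex_glue_other)
  moreover have "verts Q - {en} = insert e1 (verts Q - {e1, en})"
    using e1_vert e1_ne_en by blast
  moreover have "vertex_dB e1 = vertex_dA e1 + vertex_dA en" by (rule delta0_b_vertex_glue_e1)
  ultimately have B: "vertex_dB ` (verts Q - {en}) = insert (vertex_dA e1 + vertex_dA en) ?T"
    by simp
  show ?thesis unfolding A B by (rule span_insert_insert_add[symmetric])
qed

(* Writing delta0(e1\<parallel>e1) through the glued vertices yields a function on vertices that
   is constant along arrows but differs at e1 and en. *)

lemma vertex_dA_e1_not_in_span:
  assumes "same_block Q e1 en"
  shows "vertex_dA e1 \<notin> FS.span (vertex_dB ` (verts Q - {en}))"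
proof
  assume "vertex_dA e1 \<in> FS.span (vertex_dB ` (verts Q - {en}))"
  then obtain c where c: "vertex_dA e1 = (\<Sum>v\<in>verts Q - {en}. fscale (c v) (vertex_dB v))"
    using span_image_sum_repr finite_verts by blast
  define h where "h x = c (gm x) - (if x = e1 then 1 else (0::'k))" for x
  have "h (src Q b) = h (tgt Q b)" if b: "b \<in> arrs Q" for b
  proof -
    have gs: "gm (src Q b) \<in> verts Q - {en}" "gm (tgt Q b) \<in> verts Q - {en}"
      using src_vert[OF b] tgt_vert[OF b] glue_verts by auto
    have "vertex_dA e1 (Arr [b], Arr [b]) = (\<Sum>v\<in>verts Q - {en}. c v * vertex_dB v (Arr [b], Arr [b]))"
      by (subst c) (simp add: sum_fun_apply)
    also have "\<dots> = (\<Sum>v\<in>verts Q - {en}. (if gm (src Q b) = v then c v else 0) - (if gm (tgt Q b) = v then c v else 0))"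
      using b by (intro sum.cong) (auto simp: delta0_b_vertex_glue)
    also have "\<dots> = c (gm (src Q b)) - c (gm (tgt Q b))"
      using gs finite_verts by (simp add: sum_subtractf sum.delta)
    finally show ?thesis
      using b by (simp add: h_def delta0_b_vertex[OF finite_arrs basis_single_iff] algebra_simps)
  qed
  moreover have "(e1, en) \<in> (adj Q)\<^sup>*" using assms by (simp add: same_block_def conn_rel_def)
  ultimately have "h e1 = h en" by (rule adj_rtrancl_const)
  then show False using e1_ne_en by (simp add: h_def)
qed

(* The incidence vectors of the vertices of the component of e1 sum to zero, and this
   component avoids en. *)

lemma vertex_dA_e1_in_span:
  assumes "\<not> same_block Q e1 en"
  shows "vertex_dA e1 \<in> FS.span (vertex_dB ` (verts Q - {en}))"
proof -
  define C where "C = {v \<in> verts Q. (e1, v) \<in> (adj Q)\<^sup>*}"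
  have finC: "finite C" using finite_verts by (simp add: C_def)
  have e1C: "e1 \<in> C" using e1_vert by (simp add: C_def)
  have enC: "en \<notin> C" using assms e1_vert en_vert by (auto simp: C_def same_block_def conn_rel_def)
  have closed: "src Q b \<in> C \<longleftrightarrow> tgt Q b \<in> C" if b: "b \<in> arrs Q" for b
    using arr_in_adj[OF b] src_vert[OF b] tgt_vert[OF b] by (auto simp: C_def intro: rtrancl_into_rtrancl)
  have "(\<Sum>v\<in>C. vertex_dA v) q = 0" for q
  proof (cases "\<exists>b\<in>arrs Q. q = (Arr [b], Arr [b])")
    case True
    then obtain b where b: "b \<in> arrs Q" "q = (Arr [b], Arr [b])" by blast
    have "(\<Sum>v\<in>C. vertex_dA v) q = (\<Sum>v\<in>C. (if src Q b = v then 1 else 0) - (if tgt Q b = v then 1 else (0::'k)))"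
      using b by (simp add: sum_fun_apply delta0_b_vertex[OF finite_arrs basis_single_iff])
    also have "\<dots> = 0"
      using finC closed[OF b(1)] by (simp add: sum_subtractf sum.delta)
    finally show ?thesis .
  next
    case False
    then show ?thesis by (simp add: sum_fun_apply delta0_b_vertex[OF finite_arrs basis_single_iff])
  qed
  then have "vertex_dA e1 = - (\<Sum>v\<in>C - {e1}. vertex_dA v)"
    using finC e1C by (simp add: sum.remove fun_eq_iff eq_neg_iff_add_eq_0 sum_fun_apply)
  also have "\<dots> = - (\<Sum>v\<in>C - {e1}. vertex_dB v)"
    using enC by (intro arg_cong[where f=uminus] sum.cong refl delta0_b_vertex_glue_other[symmetric]) auto
  also have "\<dots> \<in> FS.span (vertex_dB ` (verts Q - {en}))"
    using enC by (intro FS.span_neg FS.span_sum FS.span_base) (auto simp: C_def)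
  finally show ?thesis .
qed

lemma dim_vertex_images_same_block:
  assumes "same_block Q e1 en"
  shows "FS.dim (FS.span (vertex_dA ` verts Q)) = FS.dim (FS.span (vertex_dB ` (verts Q - {en}))) + 1"
  unfolding span_vertex_dA FS.dim_span
  using finite_verts vertex_dA_e1_not_in_span[OF assms]
  by (intro dim_insert_not_in_span[OF FS.span_superset]) simp_all

lemma span_vertex_images_not_same_block:
  assumes "\<not> same_block Q e1 en"
  shows "FS.span (vertex_dA ` verts Q) = FS.span (vertex_dB ` (verts Q - {en}))"
  unfolding span_vertex_dA using FS.span_redundant[OF vertex_dA_e1_in_span[OF assms]] .

lemma ImB_eq_ImA_not_same_block:
  assumes "\<not> same_block Q e1 en"
  shows "ImB = ImA"
  unfolding ImA_eq ImB_eq FS.span_Un no_new_cycle_pairs[OF assms]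
  using span_vertex_images_not_same_block[OF assms] by simp

end

section \<open>Comparison of the first Hochschild cohomology\<close>

context gluing
begin

lemma br_b_glue_eq:
  assumes "p \<in> P1A - loop_pairsA" "q \<in> P1A - loop_pairsA"
  shows "br_b QB ZB p q = (br_b Q Z p q :: _ \<Rightarrow> 'k::comm_ring_1)"
proof -
  obtain a g b e where pq: "p = (a, g)" "q = (b, e)" by (cases p, cases q)
  then have "g \<noteq> Triv en" "e \<noteq> Triv en" using assms P1A_loop_pairsA_not_en by blast+
  then show ?thesis unfolding pq br_b_def by (simp add: repl_glue_eq)
qed

end

context gluing_char
begin

lemma hh1_dim_glue:
  "hh1_dim K Q Z = hh1_dim K QB ZB - 1 - int (kspp K Q Z e1 en) + int (sp K Q Z e1 en)
     + int (ncomp Q) - int (ncomp QB)"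
proof -
  have "int (FS.dim (FS.span (vertex_dA ` verts Q)))
      = int (FS.dim (FS.span (vertex_dB ` (verts Q - {en})))) + 1 - int (ncomp Q) + int (ncomp QB)"
    using dim_vertex_images_same_block ncomp_glue_same_block
      span_vertex_images_not_same_block ncomp_glue_not_same_block
    by (cases "same_block Q e1 en") simp_all
  then show ?thesis
    using kdim_KerB kdim_ImA kdim_ImB dim_new_cycle_images by (simp add: hh1_dim_def)
qed

lemma bracket_glue_eq:
  assumes x: "x \<in> KerA" and y: "y \<in> KerA"
  shows "bracket QB ZB x y = bracket Q Z x y"
proof -
  have xy: "x \<in> spanned (P1A - loop_pairsA)" "y \<in> spanned (P1A - loop_pairsA)"
    using x y KerA_subset_spanned by blast+
  have "bracket QB ZB x y
      = (\<Sum>p\<in>P1A - loop_pairsA. \<Sum>q\<in>P1A - loop_pairsA. fscale (x p * y q) (br_b QB ZB p q))"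
    unfolding bracket_def Q1_glue using P1A_loop_pairsA_subset finite_P1B
    by (intro double_sum_restrict_spanned[OF _ _ xy]) (auto simp: Q1_glue)
  also have "\<dots> = (\<Sum>p\<in>P1A - loop_pairsA. \<Sum>q\<in>P1A - loop_pairsA. fscale (x p * y q) (br_b Q Z p q))"
    by (intro sum.cong refl) (simp add: br_b_glue_eq)
  also have "\<dots> = bracket Q Z x y"
    unfolding bracket_def by (rule double_sum_restrict_spanned[OF finite_P1A _ xy, symmetric]) blast
  finally show ?thesis .
qed

lemma hh1_lie_embeds_glue:
  assumes "\<not> same_block Q e1 en"
  shows "hh1_lie_embeds K Q Z QB ZB"
  unfolding hh1_lie_embeds_def
proof (rule exI[of _ id], intro conjI ballI allI)
  fix x y assume x: "x \<in> KerA" and y: "y \<in> KerA"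
  show "id (bracket Q Z x y) - bracket QB ZB (id x) (id y) \<in> ImB"
    using bracket_glue_eq[OF x y] FS.span_zero by (simp add: ImB_eq)
qed (use KerA_subset_KerB ImB_eq_ImA_not_same_block[OF assms] in auto)

end

theorem theorem3p20:
  fixes Q :: "('v,'a) quiver" and Z :: "'a list set" and e1 en :: 'v
  assumes "monomial_algebra Q Z"
    and "e1 \<in> verts Q" and "en \<in> verts Q" and "e1 \<noteq> en"
    and "non_isolated Q e1" and "non_isolated Q en"
    and "\<forall>\<alpha>\<in>arrs Q. src Q \<alpha> = tgt Q \<alpha> \<and> src Q \<alpha> \<in> {e1, en} \<longrightarrow>
           (\<forall>m::nat. m \<ge> 2 \<and> replicate m \<alpha> \<in> Z \<longrightarrow> \<not> CHAR('k::field) dvd m)"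
  shows "hh1_dim TYPE('k) Q Z =
           hh1_dim TYPE('k) (glue Q e1 en) (glueZ Q Z e1 en) - 1
           - int (kspp TYPE('k) Q Z e1 en) + int (sp TYPE('k) Q Z e1 en)
           + int (ncomp Q) - int (ncomp (glue Q e1 en)) \<and>
         (same_block Q e1 en \<longrightarrow>
           hh1_dim TYPE('k) Q Z =
           hh1_dim TYPE('k) (glue Q e1 en) (glueZ Q Z e1 en) - 1
           - int (kspp TYPE('k) Q Z e1 en) + int (sp TYPE('k) Q Z e1 en)) \<and>
         (\<not> same_block Q e1 en \<longrightarrow>
           hh1_lie_embeds TYPE('k) Q Z (glue Q e1 en) (glueZ Q Z e1 en) \<and>
           hh1_dim TYPE('k) Q Z =
           hh1_dim TYPE('k) (glue Q e1 en) (glueZ Q Z e1 en) - int (kspp TYPE('k) Q Z e1 en))"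
proof -
  interpret gluing_char Q Z e1 en "TYPE('k)"
    using assms by unfold_locales
  show ?thesis
    using hh1_dim_glue ncomp_glue_same_block ncomp_glue_not_same_block sp_not_same_block
      hh1_lie_embeds_glue
    by auto
qed

end
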